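(* Let $a,x,y\in(0,1)$ with $ay<x$, and let $W_{(\alpha,\beta)}(a,x,y)=(T_1,T_2)$ be the 2-variable weighted shift defined below. Then $W_{(\alpha,\beta)}(a,x,y)$ is (jointly) semi-hyponormal if and only if $$a^2\le\frac{x\left(4x^2-x^4+4x^3y+4y^2-6x^2y^2+4xy^3-y^4\right)}{4y(x^2+y^2)}$$ and $$\sqrt{\frac{(x^2+y^2)(x+a^2y)}{x}}\ \ge\ \frac{(x+y)^2}{2}+\sqrt{\frac{(x+a^2y)(x-y)^4}{4(x-a^2y)}}.$$
   Context: A 2-variable weighted shift $W_{(\alpha,\beta)}=(T_1,T_2)$ on $\ell^2(\mathbb{Z}_+^2)$ (orthonormal basis $\{e_{\mathbf{k}}\}$) is given by $T_1e_{\mathbf{k}}=\alpha_{\mathbf{k}}e_{\mathbf{k}+(1,0)}$, $T_2e_{\mathbf{k}}=\beta_{\mathbf{k}}e_{\mathbf{k}+(0,1)}$ for bounded positive weights. $W_{(\alpha,\beta)}(a,x,y)$ is the one with $\alpha_{(0,0)}=x$, $\alpha_{(0,k_2)}=a$ for $k_2\ge1$, $\alpha_{(k_1,k_2)}=1$ for $k_1\ge1,k_2\ge0$; $\beta_{(0,0)}=y$, $\beta_{(k_1,0)}=ay/x$ for $k_1\ge1$, and $\beta_{(k_1,k_2)}=1$ for all other $(k_1,k_2)$ (i.e. $k_2\ge1$); it is a commuting pair. For a commuting pair $(T_1,T_2)$ let $L=\begin{pmatrix} T_1^*T_1 & T_2^*T_1\\ T_1^*T_2 & T_2^*T_2\end{pmatrix}$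 and $R=\begin{pmatrix} T_1T_1^* & T_1T_2^*\\ T_2T_1^* & T_2T_2^*\end{pmatrix}$ on $\mathcal{H}\oplus\mathcal{H}$. The pair is semi-hyponormal if $L\ge0$ and $\sqrt{L}\ge\sqrt{R}$ (positive square roots). *)

theory Defs
  imports "HOL-Analysis.Analysis"
begin

definition ell2 :: "('i \<Rightarrow> complex) set" where
  "ell2 = {f. (\<lambda>i. (cmod (f i))\<^sup>2) summable_on UNIV}"

definition ip :: "('i \<Rightarrow> complex) \<Rightarrow> ('i \<Rightarrow> complex) \<Rightarrow> complex" where
  "ip f g = infsum (\<lambda>i. f i * cnj (g i)) UNIV"

definition nsq :: "('i \<Rightarrow> complex) \<Rightarrow> real" where
  "nsq f = infsum (\<lambda>i. (cmod (f i))\<^sup>2) UNIV"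

text \<open>Operators are functions on all of \<open>'i \<Rightarrow> complex\<close>; only their behaviour on ell2 matters.\<close>

definition bounded_op :: "(('i \<Rightarrow> complex) \<Rightarrow> ('j \<Rightarrow> complex)) \<Rightarrow> bool" where
  "bounded_op A \<longleftrightarrow>
     (\<forall>f\<in>ell2. A f \<in> ell2) \<and>
     (\<forall>f\<in>ell2. \<forall>g\<in>ell2. A (\<lambda>i. f i + g i) = (\<lambda>i. A f i + A g i)) \<and>
     (\<forall>f\<in>ell2. \<forall>c. A (\<lambda>i. c * f i) = (\<lambda>i. c * A f i)) \<and>
     (\<exists>C. \<forall>f\<in>ell2. nsq (A f) \<le> C * nsq f)"

text \<open>Hilbert space adjoint (normalised to be 0 outside ell2, so that it is unique).\<close>

definition adj :: "(('i \<Rightarrow> complex) \<Rightarrow> ('j \<Rightarrow> complex)) \<Rightarrow> (('j \<Rightarrow> complex) \<Rightarrow> ('i \<Rightarrow> complex))" where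
  "adj A = (THE B. (\<forall>g. g \<notin> ell2 \<longrightarrow> B g = (\<lambda>_. 0)) \<and> (\<forall>g\<in>ell2. B g \<in> ell2) \<and>
                   (\<forall>f\<in>ell2. \<forall>g\<in>ell2. ip (A f) g = ip f (B g)))"

definition positive_op :: "(('i \<Rightarrow> complex) \<Rightarrow> ('i \<Rightarrow> complex)) \<Rightarrow> bool" where
  "positive_op A \<longleftrightarrow> bounded_op A \<and>
     (\<forall>f\<in>ell2. Im (ip (A f) f) = 0 \<and> Re (ip (A f) f) \<ge> 0)"

definition op_le :: "(('i \<Rightarrow> complex) \<Rightarrow> ('i \<Rightarrow> complex)) \<Rightarrow> (('i \<Rightarrow> complex) \<Rightarrow> ('i \<Rightarrow> complex)) \<Rightarrow> bool" where
  "op_le A B \<longleftrightarrow> positive_op (\<lambda>f i. B f i - A f i)"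

text \<open>The positive square root (normalised to be 0 outside ell2, so that it is unique).\<close>

definition op_sqrt :: "(('i \<Rightarrow> complex) \<Rightarrow> ('i \<Rightarrow> complex)) \<Rightarrow> (('i \<Rightarrow> complex) \<Rightarrow> ('i \<Rightarrow> complex))" where
  "op_sqrt A = (THE S. positive_op S \<and> (\<forall>f. f \<notin> ell2 \<longrightarrow> S f = (\<lambda>_. 0)) \<and>
                       (\<forall>f\<in>ell2. S (S f) = A f))"

section \<open>Operator matrices on \<open>H \<oplus> H\<close> (index type \<open>'i + 'i\<close>)\<close>

definition opmat ::
  "(('i \<Rightarrow> complex) \<Rightarrow> ('i \<Rightarrow> complex)) \<Rightarrow> (('i \<Rightarrow> complex) \<Rightarrow> ('i \<Rightarrow> complex)) \<Rightarrow>
   (('i \<Rightarrow> complex) \<Rightarrow> ('i \<Rightarrow> complex)) \<Rightarrow> (('i \<Rightarrow> complex) \<Rightarrow> ('i \<Rightarrow> complex)) \<Rightarrow>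
   (('i + 'i \<Rightarrow> complex) \<Rightarrow> ('i + 'i \<Rightarrow> complex))" where
  "opmat A B C D = (\<lambda>v. case_sum (\<lambda>i. A (v \<circ> Inl) i + B (v \<circ> Inr) i)
                                  (\<lambda>i. C (v \<circ> Inl) i + D (v \<circ> Inr) i))"

definition semi_hyponormal ::
  "(('i \<Rightarrow> complex) \<Rightarrow> ('i \<Rightarrow> complex)) \<Rightarrow> (('i \<Rightarrow> complex) \<Rightarrow> ('i \<Rightarrow> complex)) \<Rightarrow> bool" where
  "semi_hyponormal T1 T2 \<longleftrightarrow>
     (let L = opmat (adj T1 \<circ> T1) (adj T2 \<circ> T1) (adj T1 \<circ> T2) (adj T2 \<circ> T2);
          R = opmat (T1 \<circ> adj T1) (T1 \<circ> adj T2) (T2 \<circ> adj T1) (T2 \<circ> adj T2)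
      in positive_op L \<and> op_le (op_sqrt R) (op_sqrt L))"

definition shift1 :: "(nat \<times> nat \<Rightarrow> real) \<Rightarrow> (nat \<times> nat \<Rightarrow> complex) \<Rightarrow> (nat \<times> nat \<Rightarrow> complex)" where
  "shift1 w f = (\<lambda>(k1, k2). if k1 = 0 then 0 else complex_of_real (w (k1 - 1, k2)) * f (k1 - 1, k2))"

definition shift2 :: "(nat \<times> nat \<Rightarrow> real) \<Rightarrow> (nat \<times> nat \<Rightarrow> complex) \<Rightarrow> (nat \<times> nat \<Rightarrow> complex)" where
  "shift2 w f = (\<lambda>(k1, k2). if k2 = 0 then 0 else complex_of_real (w (k1, k2 - 1)) * f (k1, k2 - 1))"

text \<open>\<open>T1 e_k = \<alpha>_k e_{k+(1,0)}\<close>, \<open>T2 e_k = \<beta>_k e_{k+(0,1)}\<close>.\<close>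

definition alphaW :: "real \<Rightarrow> real \<Rightarrow> real \<Rightarrow> nat \<times> nat \<Rightarrow> real" where
  "alphaW a x y = (\<lambda>(k1, k2). if k1 = 0 \<and> k2 = 0 then x else if k1 = 0 then a else 1)"

definition betaW :: "real \<Rightarrow> real \<Rightarrow> real \<Rightarrow> nat \<times> nat \<Rightarrow> real" where
  "betaW a x y = (\<lambda>(k1, k2). if k1 = 0 \<and> k2 = 0 then y else if k2 = 0 then a * y / x else 1)"

definition W1 :: "real \<Rightarrow> real \<Rightarrow> real \<Rightarrow> (nat \<times> nat \<Rightarrow> complex) \<Rightarrow> (nat \<times> nat \<Rightarrow> complex)" where
  "W1 a x y = shift1 (alphaW a x y)"

definition W2 :: "real \<Rightarrow> real \<Rightarrow> real \<Rightarrow> (nat \<times> nat \<Rightarrow> complex) \<Rightarrow> (nat \<times> nat \<Rightarrow> complex)" where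
  "W2 a x y = shift2 (betaW a x y)"

end

theory Submission
  imports Defs
begin

(* For a 2-variable weighted shift both operator matrices L and R are direct sums of 1x1 blocks
   and of real symmetric 2x2 blocks, the 2x2 blocks acting on span {e_k (+) 0, 0 (+) e_(k-(1,0)+(0,1))}.
   The positive square root of such an operator is the direct sum of the blockwise square roots,
   and for a positive 2x2 matrix M one has sqrt M = (M + sqrt(det M) I) / sqrt(tr M + 2 sqrt(det M)).
   Hence sqrt L - sqrt R is again block diagonal, and semi-hyponormality amounts to the positivity
   of explicit 2x2 matrices. For W(a,x,y) the blocks of L are [[1,u],[u,1]] and those of R have
   rank one; all blocks but the one at k = (1,0) turn out to be positive for every admissible
   (a,x,y), and the determinant condition of the remaining block is the stated inequality. *)

lemma cmod_add_square_le: "(cmod (z + w))\<^sup>2 \<le> 2 * (cmod z)\<^sup>2 + 2 * (cmod w)\<^sup>2"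
proof -
  have "(cmod (z + w))\<^sup>2 \<le> (cmod z + cmod w)\<^sup>2"
    by (intro power_mono norm_triangle_ineq) simp
  also have "\<dots> \<le> 2 * (cmod z)\<^sup>2 + 2 * (cmod w)\<^sup>2"
    using sum_squares_bound[of "cmod z" "cmod w"] by (simp add: power2_sum)
  finally show ?thesis .
qed

lemma ell2_add:
  assumes "f \<in> ell2" "g \<in> ell2" shows "(\<lambda>i. f i + g i) \<in> ell2"
proof -
  have "(\<lambda>i. 2 * (cmod (f i))\<^sup>2 + 2 * (cmod (g i))\<^sup>2) summable_on UNIV"
    using assms by (intro summable_on_add summable_on_cmult_right) (auto simp: ell2_def)
  then show ?thesis unfolding ell2_def mem_Collect_eq
    by (rule summable_on_comparison_test) (simp_all add: cmod_add_square_le)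
qed

lemma ell2_scale:
  assumes "f \<in> ell2" shows "(\<lambda>i. c * f i) \<in> ell2"
proof -
  have "(\<lambda>i. (cmod c)\<^sup>2 * (cmod (f i))\<^sup>2) summable_on UNIV"
    using assms by (intro summable_on_cmult_right) (auto simp: ell2_def)
  then show ?thesis by (simp add: ell2_def norm_mult power_mult_distrib)
qed

lemma ell2_finite_support:
  assumes "finite {i. f i \<noteq> 0}" shows "f \<in> ell2"
proof -
  have "(\<lambda>i. (cmod (f i))\<^sup>2) summable_on {i. f i \<noteq> 0}" using assms by simp
  then show ?thesis unfolding ell2_def mem_Collect_eq
    by (rule summable_on_cong_neutral[THEN iffD1, rotated -1]) auto
qed

lemma ell2_dominated:
  assumes "h \<in> ell2" "\<And>i. cmod (g i) \<le> cmod (h i)"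
  shows "g \<in> ell2" "nsq g \<le> nsq h"
proof -
  have le: "(cmod (g i))\<^sup>2 \<le> (cmod (h i))\<^sup>2" for i
    by (intro power_mono assms(2)) simp
  have "(\<lambda>i. (cmod (h i))\<^sup>2) summable_on UNIV" using assms(1) by (simp add: ell2_def)
  then have "(\<lambda>i. (cmod (g i))\<^sup>2) summable_on UNIV"
    by (rule summable_on_comparison_test) (simp_all add: le)
  then show g: "g \<in> ell2" by (simp add: ell2_def)
  show "nsq g \<le> nsq h" unfolding nsq_def
    using g assms(1) le by (intro infsum_mono) (auto simp: ell2_def)
qed

lemma ell2_reindex_inj:
  assumes "inj h" "f \<in> ell2" shows "f \<circ> h \<in> ell2"
proof -
  have "(\<lambda>k. (cmod (f k))\<^sup>2) summable_on range h"
    using assms(2) summable_on_subset[of _ UNIV "range h"] by (auto simp: ell2_def)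
  then show ?thesis using summable_on_reindex[OF assms(1), of "\<lambda>k. (cmod (f k))\<^sup>2"]
    by (simp add: ell2_def o_def)
qed

lemma ell2_involution_reindex:
  assumes "\<And>j. p (p j) = j" "f \<in> ell2"
  shows "(\<lambda>j. f (p j)) \<in> ell2" and "nsq (\<lambda>j. f (p j)) = nsq f"
proof -
  have "inj p" "range p = UNIV" using involuntory_imp_bij[of p] assms(1) by (auto simp: bij_def)
  then show "(\<lambda>j. f (p j)) \<in> ell2" "nsq (\<lambda>j. f (p j)) = nsq f"
    using assms(2) summable_on_reindex[of p UNIV "\<lambda>i. (cmod (f i))\<^sup>2"]
      infsum_reindex[of p UNIV "\<lambda>i. (cmod (f i))\<^sup>2"]
    by (simp_all add: ell2_def nsq_def o_def)
qed

lemma nsq_scale: "nsq (\<lambda>i. c * f i) = (cmod c)\<^sup>2 * nsq f"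
proof -
  have "(\<lambda>i. (cmod (c * f i))\<^sup>2) = (\<lambda>i. (cmod c)\<^sup>2 * (cmod (f i))\<^sup>2)"
    by (simp add: norm_mult power_mult_distrib)
  then show ?thesis unfolding nsq_def by (simp only: infsum_cmult_right')
qed

lemma nsq_add_le:
  assumes "f \<in> ell2" "g \<in> ell2"
  shows "nsq (\<lambda>i. f i + g i) \<le> 2 * nsq f + 2 * nsq g"
proof -
  have sf: "(\<lambda>i. (cmod (f i))\<^sup>2) summable_on UNIV" and sg: "(\<lambda>i. (cmod (g i))\<^sup>2) summable_on UNIV"
    using assms by (auto simp: ell2_def)
  have "nsq (\<lambda>i. f i + g i) \<le> infsum (\<lambda>i. 2 * (cmod (f i))\<^sup>2 + 2 * (cmod (g i))\<^sup>2) UNIV"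
    unfolding nsq_def using ell2_add[OF assms] sf sg
    by (intro infsum_mono summable_on_add summable_on_cmult_right) (auto simp: ell2_def cmod_add_square_le)
  also have "\<dots> = 2 * nsq f + 2 * nsq g"
    unfolding nsq_def using sf sg
    by (simp add: infsum_add summable_on_cmult_right infsum_cmult_right)
  finally show ?thesis .
qed

lemma nsq_eq_0:
  assumes "f \<in> ell2" "nsq f \<le> 0" shows "f = (\<lambda>_. 0)"
proof
  fix j
  have "infsum (\<lambda>i. (cmod (f i))\<^sup>2) {j} \<le> infsum (\<lambda>i. (cmod (f i))\<^sup>2) UNIV"
    using assms(1) by (intro infsum_mono_neutral) (auto simp: ell2_def)
  then have "(cmod (f j))\<^sup>2 \<le> nsq f" by (simp add: nsq_def)
  then have "(cmod (f j))\<^sup>2 \<le> 0" using assms(2) by linarith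
  then show "f j = 0" by simp
qed

lemma ip_summable:
  assumes "f \<in> ell2" "g \<in> ell2"
  shows "(\<lambda>i. f i * cnj (g i)) summable_on UNIV"
proof (rule abs_summable_summable)
  have "(\<lambda>i. (cmod (f i))\<^sup>2 + (cmod (g i))\<^sup>2) summable_on UNIV"
    using assms by (intro summable_on_add) (auto simp: ell2_def)
  moreover have "norm (f i * cnj (g i)) \<le> (cmod (f i))\<^sup>2 + (cmod (g i))\<^sup>2" for i
    using sum_squares_bound[of "cmod (f i)" "cmod (g i)"]
    by (simp add: norm_mult mult.assoc)
      (use mult_nonneg_nonneg[OF norm_ge_zero norm_ge_zero, of "f i" "g i"] in linarith)
  ultimately show "(\<lambda>i. norm (f i * cnj (g i))) summable_on UNIV"
    by (rule summable_on_comparison_test) simp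
qed

lemma ip_add_left:
  assumes "f \<in> ell2" "g \<in> ell2" "h \<in> ell2"
  shows "ip (\<lambda>i. f i + g i) h = ip f h + ip g h"
  unfolding ip_def using ip_summable[OF assms(1,3)] ip_summable[OF assms(2,3)]
  by (simp add: distrib_right infsum_add)

lemma ip_scale_left:
  assumes "f \<in> ell2" "h \<in> ell2"
  shows "ip (\<lambda>i. c * f i) h = c * ip f h"
  unfolding ip_def using ip_summable[OF assms]
  by (simp add: mult.assoc infsum_cmult_right)

lemma ip_commute: "ip g f = cnj (ip f g)"
  unfolding ip_def by (simp flip: infsum_cnj add: mult.commute)

lemma ip_add_right:
  assumes "f \<in> ell2" "g \<in> ell2" "h \<in> ell2"
  shows "ip h (\<lambda>i. f i + g i) = ip h f + ip h g"
  using ip_add_left[OF assms] by (metis ip_commute complex_cnj_add)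

lemma ip_scale_right:
  assumes "f \<in> ell2" "h \<in> ell2"
  shows "ip h (\<lambda>i. c * f i) = cnj c * ip h f"
  using ip_scale_left[OF assms, of c] by (metis ip_commute complex_cnj_mult)

lemma ip_self:
  assumes "f \<in> ell2" shows "ip f f = complex_of_real (nsq f)"
proof -
  have "(\<lambda>i. (cmod (f i))\<^sup>2) summable_on UNIV" using assms by (simp add: ell2_def)
  then have "((\<lambda>i. complex_of_real ((cmod (f i))\<^sup>2)) has_sum complex_of_real (nsq f)) UNIV"
    unfolding nsq_def by (intro has_sum_of_real) (simp add: has_sum_infsum)
  moreover have "(\<lambda>i. f i * cnj (f i)) = (\<lambda>i. complex_of_real ((cmod (f i))\<^sup>2))"
    by (simp only: complex_norm_square)
  ultimately show ?thesis unfolding ip_def by (simp add: infsumI)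
qed

lemma ip_finite_support:
  assumes "finite F" "\<And>i. i \<notin> F \<Longrightarrow> g i = 0"
  shows "ip f g = (\<Sum>i\<in>F. f i * cnj (g i))"
proof -
  have "ip f g = infsum (\<lambda>i. f i * cnj (g i)) F"
    unfolding ip_def by (rule infsum_cong_neutral) (auto simp: assms)
  then show ?thesis using assms by simp
qed

lemma ip_zero_right: "ip f (\<lambda>_. 0) = 0"
  by (subst ip_finite_support[of "{}"]) auto

definition unit_vec :: "'i \<Rightarrow> 'i \<Rightarrow> complex" where
  "unit_vec j = (\<lambda>k. if k = j then 1 else 0)"

lemma unit_vec_ell2: "unit_vec j \<in> ell2"
  by (rule ell2_finite_support) (simp add: unit_vec_def)

lemma ip_unit_vec_right: "ip f (unit_vec j) = f j"
proof -
  have "ip f (unit_vec j) = infsum (\<lambda>i. f i * cnj (unit_vec j i)) {j}"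
    unfolding ip_def by (rule infsum_cong_neutral) (auto simp: unit_vec_def)
  then show ?thesis by (simp add: unit_vec_def)
qed

lemma ip_unit_vec_left: "ip (unit_vec j) f = cnj (f j)"
  by (metis ip_commute ip_unit_vec_right)


lemma bounded_op_ell2: "bounded_op A \<Longrightarrow> f \<in> ell2 \<Longrightarrow> A f \<in> ell2"
  and bounded_op_add: "bounded_op A \<Longrightarrow> f \<in> ell2 \<Longrightarrow> g \<in> ell2 \<Longrightarrow> A (\<lambda>i. f i + g i) = (\<lambda>i. A f i + A g i)"
  and bounded_op_scale: "bounded_op A \<Longrightarrow> f \<in> ell2 \<Longrightarrow> A (\<lambda>i. c * f i) = (\<lambda>i. c * A f i)"
  by (simp_all add: bounded_op_def)

lemma bounded_op_lincomb:
  assumes "bounded_op A" "f \<in> ell2" "g \<in> ell2"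
  shows "A (\<lambda>i. c * f i + d * g i) = (\<lambda>i. c * A f i + d * A g i)"
proof -
  have "A (\<lambda>i. c * f i + d * g i) = (\<lambda>i. A (\<lambda>i. c * f i) i + A (\<lambda>i. d * g i) i)"
    by (rule bounded_op_add[OF assms(1) ell2_scale[OF assms(2)] ell2_scale[OF assms(3)]])
  then show ?thesis using assms by (simp add: bounded_op_scale)
qed

lemma positive_op_cong:
  assumes "\<And>f. f \<in> ell2 \<Longrightarrow> A f = B f"
  shows "positive_op A \<longleftrightarrow> positive_op B"
proof -
  have "A (\<lambda>i. f i + g i) = B (\<lambda>i. f i + g i)" if "f \<in> ell2" "g \<in> ell2" for f g
    using assms ell2_add that by blast
  moreover have "A (\<lambda>i. c * f i) = B (\<lambda>i. c * f i)" if "f \<in> ell2" for f c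
    using assms ell2_scale that by blast
  ultimately have "bounded_op A \<longleftrightarrow> bounded_op B"
    unfolding bounded_op_def using assms by auto
  then show ?thesis unfolding positive_op_def using assms by auto
qed

text \<open>A positive operator is self-adjoint: polarise the real quadratic form \<open>\<langle>S h, h\<rangle>\<close>
  at \<open>h = f + g\<close> and \<open>h = f + \<i> g\<close>.\<close>

lemma positive_op_self_adjoint:
  assumes "positive_op S" "f \<in> ell2" "g \<in> ell2"
  shows "ip (S f) g = ip f (S g)"
proof -
  have bS: "bounded_op S" using assms(1) by (simp add: positive_op_def)
  have real: "Im (ip (S h) h) = 0" if "h \<in> ell2" for h
    using assms(1) that by (simp add: positive_op_def)
  have Sf: "S f \<in> ell2" and Sg: "S g \<in> ell2" using bS assms by (auto simp: bounded_op_ell2)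
  have expand: "ip (S (\<lambda>i. f i + c * g i)) (\<lambda>i. f i + c * g i)
      = ip (S f) f + cnj c * ip (S f) g + c * ip (S g) f + c * cnj c * ip (S g) g" for c
  proof -
    have "S (\<lambda>i. f i + c * g i) = (\<lambda>i. 1 * S f i + c * S g i)"
      using bounded_op_lincomb[OF bS assms(2,3), of 1 c] by simp
    then show ?thesis using Sf Sg assms
      by (simp add: ip_add_left ip_add_right ip_scale_left ip_scale_right ell2_scale ell2_add
          algebra_simps)
  qed
  have "Im (ip (S (\<lambda>i. f i + c * g i)) (\<lambda>i. f i + c * g i)) = 0" for c
    using assms by (intro real ell2_add ell2_scale) auto
  from this[of 1] this[of \<i>] have "ip (S g) f = cnj (ip (S f) g)"
    using expand[of 1] expand[of \<i>] real[OF assms(2)] real[OF assms(3)]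
    by (simp add: complex_eq_iff)
  then show ?thesis by (metis ip_commute complex_cnj_cnj)
qed

lemma adj_eqI:
  assumes "\<And>g. g \<notin> ell2 \<Longrightarrow> B g = (\<lambda>_. 0)" "\<And>g. g \<in> ell2 \<Longrightarrow> B g \<in> ell2"
    "\<And>f g. f \<in> ell2 \<Longrightarrow> g \<in> ell2 \<Longrightarrow> ip (A f) g = ip f (B g)"
  shows "adj A = B"
  unfolding adj_def
proof (rule the_equality)
  fix B'
  assume B': "(\<forall>g. g \<notin> ell2 \<longrightarrow> B' g = (\<lambda>_. 0)) \<and> (\<forall>g\<in>ell2. B' g \<in> ell2) \<and>
     (\<forall>f\<in>ell2. \<forall>g\<in>ell2. ip (A f) g = ip f (B' g))"
  have "B' g m = B g m" if "g \<in> ell2" for g m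
  proof -
    have "cnj (B' g m) = ip (A (unit_vec m)) g"
      using B' that unit_vec_ell2 by (metis ip_unit_vec_left)
    also have "\<dots> = cnj (B g m)"
      using assms(3) that unit_vec_ell2 by (metis ip_unit_vec_left)
    finally show ?thesis by simp
  qed
  then show "B' = B" using B' assms(1) by fastforce
qed (use assms in blast)

section \<open>Uniqueness of positive square roots\<close>

text \<open>If \<open>S \<ge> 0\<close> and \<open>S\<^sup>2 v = \<lambda> v\<close> then \<open>S v = \<surd>\<lambda> v\<close>: the vector \<open>W = S v - \<surd>\<lambda> v\<close>
  satisfies \<open>S W = -\<surd>\<lambda> W\<close>, which positivity of \<open>S\<close> only allows for \<open>W = 0\<close>.\<close>

lemma positive_sqrt_eigenvector:
  assumes pos: "positive_op S" and sq: "\<And>f. f \<in> ell2 \<Longrightarrow> S (S f) = A f" and v: "v \<in> ell2"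
    and Av: "A v = (\<lambda>i. complex_of_real l * v i)" and l: "0 \<le> l"
  shows "S v = (\<lambda>i. complex_of_real (sqrt l) * v i)"
proof (cases "l = 0")
  case True
  have bS: "bounded_op S" using pos by (simp add: positive_op_def)
  have Sv: "S v \<in> ell2" using bS v by (simp add: bounded_op_ell2)
  have "ip (S v) (S v) = ip v (S (S v))" using positive_op_self_adjoint[OF pos v Sv] .
  also have "\<dots> = 0" using sq[OF v] Av True by (simp add: ip_zero_right)
  finally have "nsq (S v) \<le> 0" using ip_self[OF Sv] by simp
  then show ?thesis using nsq_eq_0[OF Sv] True by simp
next
  case False
  have bS: "bounded_op S" using pos by (simp add: positive_op_def)
  have Sv: "S v \<in> ell2" using bS v by (simp add: bounded_op_ell2)
  define r where "r = sqrt l"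
  have r: "0 < r" "complex_of_real r * complex_of_real r = complex_of_real l"
    unfolding r_def using l False by (simp_all flip: of_real_mult)
  define W where "W = (\<lambda>i. 1 * S v i + (- complex_of_real r) * v i)"
  have W: "W \<in> ell2" unfolding W_def using Sv v by (intro ell2_add ell2_scale)
  have "S W = (\<lambda>i. 1 * S (S v) i + (- complex_of_real r) * S v i)"
    unfolding W_def by (rule bounded_op_lincomb[OF bS Sv v])
  also have "\<dots> = (\<lambda>i. (- complex_of_real r) * W i)"
    unfolding W_def sq[OF v] Av using r(2) by (auto simp: fun_eq_iff algebra_simps)
  finally have SW: "S W = (\<lambda>i. (- complex_of_real r) * W i)" .
  have "ip (S W) W = (- complex_of_real r) * complex_of_real (nsq W)"
    unfolding SW ip_scale_left[OF W W] ip_self[OF W] ..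
  then have "Re (ip (S W) W) = - r * nsq W" by simp
  moreover have "Re (ip (S W) W) \<ge> 0" using pos W by (simp add: positive_op_def)
  ultimately have "nsq W \<le> 0" using r(1) by (simp add: mult_le_0_iff)
  then have "W = (\<lambda>_. 0)" using nsq_eq_0[OF W] by simp
  then show ?thesis unfolding W_def r_def by (auto simp: fun_eq_iff)
qed

definition spanned_by_eigenpairs :: "(('i \<Rightarrow> complex) \<Rightarrow> ('i \<Rightarrow> complex)) \<Rightarrow> bool" where
  "spanned_by_eigenpairs A \<longleftrightarrow> (\<forall>j. \<exists>V1 V2 l1 l2 k1 k2. V1 \<in> ell2 \<and> V2 \<in> ell2 \<and> 0 \<le> l1 \<and> 0 \<le> l2 \<and>
     A V1 = (\<lambda>i. complex_of_real l1 * V1 i) \<and> A V2 = (\<lambda>i. complex_of_real l2 * V2 i) \<and>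
     unit_vec j = (\<lambda>i. k1 * V1 i + k2 * V2 i))"

text \<open>Two positive square roots of \<open>A\<close> agree on eigenvectors of \<open>A\<close>, hence on every
  \<open>unit_vec j\<close>, hence (being self-adjoint) everywhere.\<close>

lemma positive_sqrt_unique:
  assumes "spanned_by_eigenpairs A"
    and "positive_op S1" "\<And>f. f \<notin> ell2 \<Longrightarrow> S1 f = (\<lambda>_. 0)" "\<And>f. f \<in> ell2 \<Longrightarrow> S1 (S1 f) = A f"
    and "positive_op S2" "\<And>f. f \<notin> ell2 \<Longrightarrow> S2 f = (\<lambda>_. 0)" "\<And>f. f \<in> ell2 \<Longrightarrow> S2 (S2 f) = A f"
  shows "S1 = S2"
proof -
  have b1: "bounded_op S1" and b2: "bounded_op S2" using assms(2,5) by (auto simp: positive_op_def)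
  have on_basis: "S1 (unit_vec j) = S2 (unit_vec j)" for j
  proof -
    obtain V1 V2 l1 l2 k1 k2 where V: "V1 \<in> ell2" "V2 \<in> ell2" "0 \<le> l1" "0 \<le> l2"
      "A V1 = (\<lambda>i. complex_of_real l1 * V1 i)" "A V2 = (\<lambda>i. complex_of_real l2 * V2 i)"
      and e: "unit_vec j = (\<lambda>i. k1 * V1 i + k2 * V2 i)"
      using assms(1) unfolding spanned_by_eigenpairs_def by blast
    have "S1 V1 = S2 V1" "S1 V2 = S2 V2"
      using positive_sqrt_eigenvector[OF assms(2,4) V(1,5,3)] positive_sqrt_eigenvector[OF assms(5,7) V(1,5,3)]
        positive_sqrt_eigenvector[OF assms(2,4) V(2,6,4)] positive_sqrt_eigenvector[OF assms(5,7) V(2,6,4)]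
      by simp_all
    then show ?thesis unfolding e bounded_op_lincomb[OF b1 V(1,2)] bounded_op_lincomb[OF b2 V(1,2)] by simp
  qed
  have "S1 f j = S2 f j" if f: "f \<in> ell2" for f j
  proof -
    have "S1 f j = ip f (S1 (unit_vec j))"
      using positive_op_self_adjoint[OF assms(2) f unit_vec_ell2] by (simp add: ip_unit_vec_right)
    also have "\<dots> = S2 f j"
      using positive_op_self_adjoint[OF assms(5) f unit_vec_ell2] on_basis by (simp add: ip_unit_vec_right)
    finally show ?thesis .
  qed
  then show ?thesis using assms(3,6) by (metis ext)
qed

lemma op_sqrt_eqI:
  assumes "spanned_by_eigenpairs A"
    and "positive_op S" "\<And>f. f \<notin> ell2 \<Longrightarrow> S f = (\<lambda>_. 0)" "\<And>f. f \<in> ell2 \<Longrightarrow> S (S f) = A f"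
  shows "op_sqrt A = S"
  unfolding op_sqrt_def
  by (rule the_equality) (use assms positive_sqrt_unique[OF assms(1)] in blast)+


section \<open>Operators made of \<open>1\<times>1\<close> and \<open>2\<times>2\<close> blocks\<close>

definition involution :: "('i \<Rightarrow> 'i) \<Rightarrow> bool" where
  "involution p \<longleftrightarrow> (\<forall>j. p (p j) = j)"

text \<open>For an involution \<open>p\<close>, \<open>block_op p d c\<close> acts on \<open>span {e\<^sub>j, e\<^sub>p\<^sub>j}\<close> (\<open>p j \<noteq> j\<close>) by the
  symmetric matrix \<open>[[d j, c j], [c j, d (p j)]]\<close> as soon as \<open>c\<close> is \<open>symmetric_offdiag\<close>,
  and on \<open>e\<^sub>j\<close> (\<open>p j = j\<close>) by the scalar \<open>d j\<close>.\<close>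

definition block_op :: "('i \<Rightarrow> 'i) \<Rightarrow> ('i \<Rightarrow> real) \<Rightarrow> ('i \<Rightarrow> real) \<Rightarrow> ('i \<Rightarrow> complex) \<Rightarrow> ('i \<Rightarrow> complex)" where
  "block_op p d c f = (\<lambda>j. complex_of_real (d j) * f j + complex_of_real (c j) * f (p j))"

definition symmetric_offdiag :: "('i \<Rightarrow> 'i) \<Rightarrow> ('i \<Rightarrow> real) \<Rightarrow> bool" where
  "symmetric_offdiag p c \<longleftrightarrow> (\<forall>j. c (p j) = c j) \<and> (\<forall>j. p j = j \<longrightarrow> c j = 0)"

definition psd2 :: "real \<Rightarrow> real \<Rightarrow> real \<Rightarrow> bool" where
  "psd2 a b c \<longleftrightarrow> 0 \<le> a \<and> 0 \<le> c \<and> b\<^sup>2 \<le> a * c"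

definition blocks_psd :: "('i \<Rightarrow> 'i) \<Rightarrow> ('i \<Rightarrow> real) \<Rightarrow> ('i \<Rightarrow> real) \<Rightarrow> bool" where
  "blocks_psd p d c \<longleftrightarrow> (\<forall>j. (p j = j \<longrightarrow> 0 \<le> d j) \<and> (p j \<noteq> j \<longrightarrow> psd2 (d j) (c j) (d (p j))))"

lemma psd2_commute: "psd2 a b c \<longleftrightarrow> psd2 c b a"
  unfolding psd2_def by (auto simp: mult.commute)

lemma psd2_iff_det_nonneg:
  assumes "0 < a + c" shows "psd2 a b c \<longleftrightarrow> 0 \<le> a * c - b\<^sup>2"
proof
  assume det: "0 \<le> a * c - b\<^sup>2"
  then have "0 \<le> a * c" using zero_le_power2[of b] by linarith
  then have "0 \<le> a \<and> 0 \<le> c" using assms by (auto simp: zero_le_mult_iff)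
  then show "psd2 a b c" using det by (simp add: psd2_def)
qed (simp add: psd2_def)

lemma psd2_iff_quadratic_form:
  "psd2 a b c \<longleftrightarrow> (\<forall>u v. 0 \<le> a * u\<^sup>2 + 2 * b * u * v + c * v\<^sup>2)"
proof
  assume psd: "psd2 a b c"
  show "\<forall>u v. 0 \<le> a * u\<^sup>2 + 2 * b * u * v + c * v\<^sup>2"
  proof (intro allI)
    fix u v :: real
    show "0 \<le> a * u\<^sup>2 + 2 * b * u * v + c * v\<^sup>2"
    proof (cases "a = 0")
      case True
      then show ?thesis using psd by (simp add: psd2_def)
    next
      case False
      then have "a > 0" using psd by (simp add: psd2_def)
      have "a * (a * u\<^sup>2 + 2 * b * u * v + c * v\<^sup>2) = (a * u + b * v)\<^sup>2 + (a * c - b\<^sup>2) * v\<^sup>2"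
        by (simp add: power2_eq_square algebra_simps)
      also have "\<dots> \<ge> 0" using psd by (simp add: psd2_def)
      finally show ?thesis using \<open>a > 0\<close> by (simp add: zero_le_mult_iff)
    qed
  qed
next
  assume form: "\<forall>u v. 0 \<le> a * u\<^sup>2 + 2 * b * u * v + c * v\<^sup>2"
  have a: "0 \<le> a" and c: "0 \<le> c" using form[rule_format, of 1 0] form[rule_format, of 0 1] by simp_all
  have "b\<^sup>2 \<le> a * c"
  proof (cases "a = 0")
    case True
    have "b = 0"
    proof (rule ccontr)
      assume "b \<noteq> 0"
      then have "a * (- (c + 1) / (2 * b))\<^sup>2 + 2 * b * (- (c + 1) / (2 * b)) * 1 + c * 1\<^sup>2 = -1"
        using True by simp
      then show False using form by (metis neg_0_le_iff_le not_one_le_zero)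
    qed
    then show ?thesis using True by simp
  next
    case False
    have "0 \<le> a * (-b)\<^sup>2 + 2 * b * (-b) * a + c * a\<^sup>2" using form by blast
    also have "\<dots> = a * (a * c - b\<^sup>2)" by (simp add: power2_eq_square algebra_simps)
    finally show ?thesis using a False by (simp add: zero_le_mult_iff)
  qed
  then show "psd2 a b c" using a c by (simp add: psd2_def)
qed

lemma psd2_complex_form:
  assumes "psd2 a b c"
  shows "0 \<le> (complex_of_real a * z + complex_of_real b * w) * cnj z
             + (complex_of_real c * w + complex_of_real b * z) * cnj w"
proof -
  have "0 \<le> a * (Re z)\<^sup>2 + 2 * b * Re z * Re w + c * (Re w)\<^sup>2"
    and "0 \<le> a * (Im z)\<^sup>2 + 2 * b * Im z * Im w + c * (Im w)\<^sup>2"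
    using assms by (simp_all add: psd2_iff_quadratic_form)
  then show ?thesis by (simp add: less_eq_complex_def power2_eq_square algebra_simps)
qed

lemma bounded_ranges_realE:
  fixes d c :: "'i \<Rightarrow> real"
  assumes "bounded (range d)" "bounded (range c)"
  obtains K where "\<And>j. \<bar>d j\<bar> \<le> K" "\<And>j. \<bar>c j\<bar> \<le> K"
proof -
  obtain Kd Kc where "\<And>j. \<bar>d j\<bar> \<le> Kd" "\<And>j. \<bar>c j\<bar> \<le> Kc"
    using assms unfolding bounded_iff by (metis rangeI real_norm_def)
  then show ?thesis using that[of "max Kd Kc"] by (meson max.coboundedI1 max.coboundedI2 order_trans)
qed

lemma block_op_bound:
  assumes "involution p" "\<And>j. \<bar>d j\<bar> \<le> K" "\<And>j. \<bar>c j\<bar> \<le> K" "f \<in> ell2"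
  shows "block_op p d c f \<in> ell2" "nsq (block_op p d c f) \<le> 4 * K\<^sup>2 * nsq f"
proof -
  have K: "0 \<le> K" using assms(2)[of undefined] by linarith
  define g where "g = (\<lambda>i. complex_of_real K * complex_of_real (cmod (f i)))"
  define h where "h = (\<lambda>i. complex_of_real K * complex_of_real (cmod (f (p i))))"
  have fp: "(\<lambda>j. f (p j)) \<in> ell2" "nsq (\<lambda>j. f (p j)) = nsq f"
    using ell2_involution_reindex assms(1,4) by (auto simp: involution_def)
  have norm_ell2: "(\<lambda>i. complex_of_real (cmod (u i))) \<in> ell2"
    "nsq (\<lambda>i. complex_of_real (cmod (u i))) = nsq u" if "u \<in> ell2" for u :: "'a \<Rightarrow> complex"
    using that by (auto simp: ell2_def nsq_def)
  have g: "g \<in> ell2" "nsq g = K\<^sup>2 * nsq f" and h: "h \<in> ell2" "nsq h = K\<^sup>2 * nsq f"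
    unfolding g_def h_def using assms(4) fp norm_ell2[OF assms(4)] norm_ell2[OF fp(1)]
    by (auto simp: ell2_scale nsq_scale)
  have gh: "(\<lambda>i. g i + h i) \<in> ell2" using g h by (simp add: ell2_add)
  have dom: "cmod (block_op p d c f i) \<le> cmod (g i + h i)" for i
  proof -
    have "cmod (block_op p d c f i) \<le> \<bar>d i\<bar> * cmod (f i) + \<bar>c i\<bar> * cmod (f (p i))"
      unfolding block_op_def by (rule order_trans[OF norm_triangle_ineq]) (simp add: norm_mult)
    also have "\<dots> \<le> K * cmod (f i) + K * cmod (f (p i))"
      using assms(2,3) by (intro add_mono mult_right_mono) auto
    also have "\<dots> = cmod (g i + h i)"
      using K by (simp add: g_def h_def flip: of_real_mult of_real_add)
    finally show ?thesis .
  qed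
  show "block_op p d c f \<in> ell2" using ell2_dominated(1)[OF gh dom] .
  have "nsq (block_op p d c f) \<le> nsq (\<lambda>i. g i + h i)" using ell2_dominated(2)[OF gh dom] .
  also have "\<dots> \<le> 2 * nsq g + 2 * nsq h" using nsq_add_le g h by blast
  finally show "nsq (block_op p d c f) \<le> 4 * K\<^sup>2 * nsq f" using g h by (simp add: algebra_simps)
qed

lemma block_op_ell2:
  assumes "involution p" "bounded (range d)" "bounded (range c)" "f \<in> ell2"
  shows "block_op p d c f \<in> ell2"
proof -
  obtain K where "\<And>j. \<bar>d j\<bar> \<le> K" "\<And>j. \<bar>c j\<bar> \<le> K"
    using bounded_ranges_realE[OF assms(2,3)] by blast
  then show ?thesis using block_op_bound(1) assms(1,4) by blast
qed

lemma block_op_bounded: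
  assumes "involution p" "bounded (range d)" "bounded (range c)"
  shows "bounded_op (block_op p d c)"
proof -
  obtain K where "\<And>j. \<bar>d j\<bar> \<le> K" "\<And>j. \<bar>c j\<bar> \<le> K"
    using bounded_ranges_realE[OF assms(2,3)] by blast
  then have "block_op p d c f \<in> ell2 \<and> nsq (block_op p d c f) \<le> (4 * K\<^sup>2) * nsq f" if "f \<in> ell2" for f
    using block_op_bound[OF assms(1)] that by blast
  then show ?thesis unfolding bounded_op_def
    by (intro conjI exI[of _ "4 * K\<^sup>2"] ballI allI) (auto simp: block_op_def algebra_simps)
qed

lemma block_op_comp:
  assumes "involution p"
  shows "block_op p d1 c1 (block_op p d2 c2 f) =
    block_op p (\<lambda>j. d1 j * d2 j + c1 j * c2 (p j)) (\<lambda>j. d1 j * c2 j + c1 j * d2 (p j)) f"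
  using assms by (auto simp: block_op_def involution_def algebra_simps)

lemma block_op_diff:
  "(\<lambda>j. block_op p d1 c1 f j - block_op p d2 c2 f j) = block_op p (\<lambda>j. d1 j - d2 j) (\<lambda>j. c1 j - c2 j) f"
  unfolding block_op_def by (simp add: fun_eq_iff algebra_simps)

lemma block_op_unit_vec_fixed:
  assumes "symmetric_offdiag p c" "p j = j"
  shows "block_op p d c (unit_vec j) = (\<lambda>i. complex_of_real (d j) * unit_vec j i)"
  using assms by (auto simp: block_op_def unit_vec_def symmetric_offdiag_def fun_eq_iff)

lemma block_op_unit_vec_pair:
  assumes "involution p" "symmetric_offdiag p c"
  shows "block_op p d c (\<lambda>i. u * unit_vec j i + v * unit_vec (p j) i)
     = (\<lambda>i. (complex_of_real (d j) * u + complex_of_real (c j) * v) * unit_vec j i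
          + (complex_of_real (d (p j)) * v + complex_of_real (c j) * u) * unit_vec (p j) i)"
proof -
  have "p i = j \<longleftrightarrow> i = p j" "p i = p j \<longleftrightarrow> i = j" "c (p j) = c j" for i
    using assms unfolding involution_def symmetric_offdiag_def by metis+
  then show ?thesis by (auto simp: block_op_def unit_vec_def fun_eq_iff algebra_simps)
qed

lemma block_op_pair_eigenvector:
  assumes "involution p" "symmetric_offdiag p c"
    and "d j * z1 + c j * z2 = e * z1" "c j * z1 + d (p j) * z2 = e * z2"
  shows "block_op p d c (\<lambda>i. complex_of_real z1 * unit_vec j i + complex_of_real z2 * unit_vec (p j) i)
    = (\<lambda>i. complex_of_real e * (complex_of_real z1 * unit_vec j i + complex_of_real z2 * unit_vec (p j) i))"
proof -
  have "block_op p d c (\<lambda>i. complex_of_real z1 * unit_vec j i + complex_of_real z2 * unit_vec (p j) i)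
      = (\<lambda>i. complex_of_real (d j * z1 + c j * z2) * unit_vec j i
          + complex_of_real (c j * z1 + d (p j) * z2) * unit_vec (p j) i)"
    unfolding block_op_unit_vec_pair[OF assms(1,2)] by (simp add: algebra_simps)
  also have "\<dots> = (\<lambda>i. complex_of_real e * (complex_of_real z1 * unit_vec j i + complex_of_real z2 * unit_vec (p j) i))"
    unfolding assms(3,4) by (simp add: algebra_simps)
  finally show ?thesis .
qed

text \<open>Writing \<open>q j\<close> for the \<open>j\<close>-th term of \<open>\<langle>M f, f\<rangle>\<close>, each \<open>q j + q (p j)\<close> is a value of the
  quadratic form of one block, and \<open>\<Sum> q = \<Sum> q \<circ> p\<close>, so \<open>2 \<langle>M f, f\<rangle> = \<Sum>\<^sub>j (q j + q (p j)) \<ge> 0\<close>.\<close>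

lemma block_op_form_nonneg:
  assumes "involution p" "bounded (range d)" "bounded (range c)" "symmetric_offdiag p c"
    "blocks_psd p d c" "f \<in> ell2"
  shows "0 \<le> ip (block_op p d c f) f"
proof -
  define q where "q = (\<lambda>j. block_op p d c f j * cnj (f j))"
  have pp: "\<And>j. p (p j) = j" using assms(1) by (simp add: involution_def)
  have cp: "\<And>j. c (p j) = c j" using assms(4) by (simp add: symmetric_offdiag_def)
  have bij: "inj p" "range p = UNIV" using involuntory_imp_bij[OF pp] by (auto simp: bij_def)
  have q: "q summable_on UNIV"
    unfolding q_def using ip_summable[OF block_op_ell2[OF assms(1-3,6)] assms(6)] .
  have qp: "(q \<circ> p) summable_on UNIV" and sum_qp: "infsum (q \<circ> p) UNIV = infsum q UNIV"
    using q summable_on_reindex[of p UNIV q] infsum_reindex[of p UNIV q] bij by simp_all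
  have pair: "0 \<le> q j + q (p j)" for j
  proof (cases "p j = j")
    case True
    then have "c j = 0" "0 \<le> d j"
      using assms(4,5) by (simp_all add: symmetric_offdiag_def blocks_psd_def)
    then have "psd2 (d j) 0 (d j)" by (simp add: psd2_def)
    then show ?thesis
      using psd2_complex_form[of "d j" 0 "d j" "f j" "f j"] True \<open>c j = 0\<close>
      by (simp add: q_def block_op_def)
  next
    case False
    then have "psd2 (d j) (c j) (d (p j))" using assms(5) by (simp add: blocks_psd_def)
    then show ?thesis
      using psd2_complex_form[of "d j" "c j" "d (p j)" "f j" "f (p j)"]
      by (simp add: q_def block_op_def cp pp)
  qed
  have "0 \<le> infsum (\<lambda>j. q j + q (p j)) UNIV"
    using q qp pair by (intro infsum_nonneg_complex summable_on_add) (auto simp: o_def)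
  also have "\<dots> = 2 * ip (block_op p d c f) f"
    using q qp sum_qp by (simp add: infsum_add o_def ip_def q_def)
  finally show ?thesis by (simp add: less_eq_complex_def)
qed

lemma blocks_psd_if_positive:
  assumes "involution p" "symmetric_offdiag p c" "positive_op (block_op p d c)"
  shows "blocks_psd p d c"
  unfolding blocks_psd_def
proof (intro allI conjI impI)
  have form: "\<And>f. f \<in> ell2 \<Longrightarrow> Im (ip (block_op p d c f) f) = 0 \<and> Re (ip (block_op p d c f) f) \<ge> 0"
    using assms(3) by (simp add: positive_op_def)
  fix j
  show "0 \<le> d j" if "p j = j"
  proof -
    have "ip (block_op p d c (unit_vec j)) (unit_vec j) = complex_of_real (d j)"
      unfolding block_op_unit_vec_fixed[OF assms(2) that] ip_unit_vec_right by (simp add: unit_vec_def)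
    then show ?thesis using form[OF unit_vec_ell2, of j] by simp
  qed
  show "psd2 (d j) (c j) (d (p j))" if pj: "p j \<noteq> j"
    unfolding psd2_iff_quadratic_form
  proof (intro allI)
    fix u v :: real
    define f where "f = (\<lambda>i. complex_of_real u * unit_vec j i + complex_of_real v * unit_vec (p j) i)"
    have f: "f \<in> ell2" unfolding f_def by (intro ell2_add ell2_scale unit_vec_ell2)
    have "ip (block_op p d c f) f = (\<Sum>i\<in>{j, p j}. block_op p d c f i * cnj (f i))"
      by (rule ip_finite_support) (auto simp: f_def unit_vec_def)
    also have "\<dots> = complex_of_real (d j * u\<^sup>2 + 2 * c j * u * v + d (p j) * v\<^sup>2)"
      using pj unfolding f_def block_op_unit_vec_pair[OF assms(1,2)]
      by (simp add: unit_vec_def power2_eq_square algebra_simps)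
    finally show "0 \<le> d j * u\<^sup>2 + 2 * c j * u * v + d (p j) * v\<^sup>2" using form[OF f] by simp
  qed
qed

lemma positive_block_op_iff:
  assumes "involution p" "bounded (range d)" "bounded (range c)" "symmetric_offdiag p c"
  shows "positive_op (block_op p d c) \<longleftrightarrow> blocks_psd p d c"
  using blocks_psd_if_positive[OF assms(1,4)] block_op_form_nonneg[OF assms]
    block_op_bounded[OF assms(1-3)]
  by (auto simp: positive_op_def less_eq_complex_def)


section \<open>Square roots of block operators\<close>

text \<open>For \<open>M = [[a, b], [b, c]] \<ge> 0\<close> put \<open>s = \<surd>(det M)\<close> and \<open>t = \<surd>(tr M + 2 s)\<close>. By
  Cayley--Hamilton \<open>(M + s I)\<^sup>2 = (tr M + 2 s) M\<close>, so \<open>(M + s I) / t\<close> is the positive square root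
  of \<open>M\<close> (if \<open>t = 0\<close> then \<open>M = 0\<close>, and division by zero yields the right value \<open>0\<close>).\<close>

definition sqrt2_diag :: "real \<Rightarrow> real \<Rightarrow> real \<Rightarrow> real" where
  "sqrt2_diag a b c = (a + sqrt (a * c - b\<^sup>2)) / sqrt (a + c + 2 * sqrt (a * c - b\<^sup>2))"

definition sqrt2_off :: "real \<Rightarrow> real \<Rightarrow> real \<Rightarrow> real" where
  "sqrt2_off a b c = b / sqrt (a + c + 2 * sqrt (a * c - b\<^sup>2))"

lemma sqrt2_off_commute: "sqrt2_off c b a = sqrt2_off a b c"
  by (simp add: sqrt2_off_def mult.commute add.commute)

lemma sqrt2_scalar:
  assumes "0 \<le> a" shows "sqrt2_diag a 0 a = sqrt a" "sqrt2_off a 0 a = 0"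
proof -
  have "sqrt (a + a + 2 * sqrt (a * a - 0\<^sup>2)) = 2 * sqrt a"
    using assms by (simp add: real_sqrt_mult[of 4 a, simplified])
  then show "sqrt2_diag a 0 a = sqrt a" using assms by (simp add: sqrt2_diag_def real_div_sqrt)
qed (simp add: sqrt2_off_def)

lemma psd2_sqrt2:
  assumes "psd2 a b c"
  shows "sqrt2_diag a b c * sqrt2_diag a b c + sqrt2_off a b c * sqrt2_off a b c = a"
    "sqrt2_diag a b c * sqrt2_off a b c + sqrt2_off a b c * sqrt2_diag c b a = b"
    "psd2 (sqrt2_diag a b c) (sqrt2_off a b c) (sqrt2_diag c b a)"
proof -
  define s where "s = sqrt (a * c - b\<^sup>2)"
  define t where "t = sqrt (a + c + 2 * s)"
  have abc: "0 \<le> a" "0 \<le> c" "b\<^sup>2 \<le> a * c" using assms unfolding psd2_def by blast+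
  have s: "0 \<le> s" "s\<^sup>2 = a * c - b\<^sup>2" unfolding s_def using abc by simp_all
  have t: "0 \<le> t" "t\<^sup>2 = a + c + 2 * s" unfolding t_def using abc s by simp_all
  have defs: "sqrt2_diag a b c = (a + s) / t" "sqrt2_diag c b a = (c + s) / t" "sqrt2_off a b c = b / t"
    unfolding sqrt2_diag_def sqrt2_off_def s_def t_def by (simp_all add: mult.commute add.commute)
  have "(a + s) / t * ((a + s) / t) + b / t * (b / t) = a \<and>
      (a + s) / t * (b / t) + b / t * ((c + s) / t) = b \<and> psd2 ((a + s) / t) (b / t) ((c + s) / t)"
  proof (cases "t = 0")
    case True
    then have "a = 0" "c = 0" using abc s t by simp_all
    then have "b = 0" using abc by simp
    then show ?thesis using True \<open>a = 0\<close> \<open>c = 0\<close> by (simp add: psd2_def)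
  next
    case False
    have "(a + s) / t * ((a + s) / t) + b / t * (b / t) = ((a + s) * (a + s) + b * b) / t\<^sup>2"
      "(a + s) / t * (b / t) + b / t * ((c + s) / t) = ((a + s) * b + b * (c + s)) / t\<^sup>2"
      "(a + s) / t * ((c + s) / t) - (b / t)\<^sup>2 = ((a + s) * (c + s) - b * b) / t\<^sup>2"
      using False by (simp_all add: power2_eq_square field_simps)
    moreover have "(a + s) * (a + s) + b * b = a * t\<^sup>2" "(a + s) * b + b * (c + s) = b * t\<^sup>2"
      "(a + s) * (c + s) - b * b = s * t\<^sup>2"
      using s t by (simp_all add: power2_eq_square algebra_simps)
    moreover have "0 \<le> (a + s) / t" "0 \<le> (c + s) / t" using abc s t by simp_all
    ultimately show ?thesis using False s(1) by (simp add: psd2_def)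
  qed
  then show "sqrt2_diag a b c * sqrt2_diag a b c + sqrt2_off a b c * sqrt2_off a b c = a"
    "sqrt2_diag a b c * sqrt2_off a b c + sqrt2_off a b c * sqrt2_diag c b a = b"
    "psd2 (sqrt2_diag a b c) (sqrt2_off a b c) (sqrt2_diag c b a)"
    unfolding defs by blast+
qed

definition block_sqrt_diag :: "('i \<Rightarrow> 'i) \<Rightarrow> ('i \<Rightarrow> real) \<Rightarrow> ('i \<Rightarrow> real) \<Rightarrow> 'i \<Rightarrow> real" where
  "block_sqrt_diag p d c j = sqrt2_diag (d j) (c j) (d (p j))"

definition block_sqrt_off :: "('i \<Rightarrow> 'i) \<Rightarrow> ('i \<Rightarrow> real) \<Rightarrow> ('i \<Rightarrow> real) \<Rightarrow> 'i \<Rightarrow> real" where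
  "block_sqrt_off p d c j = sqrt2_off (d j) (c j) (d (p j))"

lemma symmetric_offdiag_block_sqrt:
  assumes "involution p" "symmetric_offdiag p c"
  shows "symmetric_offdiag p (block_sqrt_off p d c)"
  unfolding symmetric_offdiag_def
proof (intro allI conjI impI)
  fix j
  have "p (p j) = j" "c (p j) = c j" using assms by (simp_all add: involution_def symmetric_offdiag_def)
  then show "block_sqrt_off p d c (p j) = block_sqrt_off p d c j"
    by (simp add: block_sqrt_off_def sqrt2_off_commute)
  show "block_sqrt_off p d c j = 0" if "p j = j"
    using assms(2) that by (simp add: symmetric_offdiag_def block_sqrt_off_def sqrt2_off_def)
qed

context
  fixes p :: "'i \<Rightarrow> 'i" and d c :: "'i \<Rightarrow> real"
  assumes p: "involution p" and c: "symmetric_offdiag p c" and psd: "blocks_psd p d c"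
begin

lemma block_sqrt_fixed:
  assumes "p j = j"
  shows "block_sqrt_diag p d c j = sqrt (d j)" "block_sqrt_off p d c j = 0"
  using assms c psd sqrt2_scalar[of "d j"]
  by (simp_all add: block_sqrt_diag_def block_sqrt_off_def symmetric_offdiag_def blocks_psd_def)

lemma block_sqrt_pair:
  assumes "p j \<noteq> j"
  shows "block_sqrt_diag p d c j * block_sqrt_diag p d c j + block_sqrt_off p d c j * block_sqrt_off p d c (p j) = d j"
    "block_sqrt_diag p d c j * block_sqrt_off p d c j + block_sqrt_off p d c j * block_sqrt_diag p d c (p j) = c j"
    "psd2 (block_sqrt_diag p d c j) (block_sqrt_off p d c j) (block_sqrt_diag p d c (p j))"
proof -
  have "p (p j) = j" "c (p j) = c j" using p c by (simp_all add: involution_def symmetric_offdiag_def)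
  then have "block_sqrt_diag p d c (p j) = sqrt2_diag (d (p j)) (c j) (d j)"
    "block_sqrt_off p d c (p j) = block_sqrt_off p d c j"
    by (simp_all add: block_sqrt_diag_def block_sqrt_off_def sqrt2_off_commute)
  moreover have "psd2 (d j) (c j) (d (p j))" using psd assms by (simp add: blocks_psd_def)
  ultimately show "block_sqrt_diag p d c j * block_sqrt_diag p d c j + block_sqrt_off p d c j * block_sqrt_off p d c (p j) = d j"
    "block_sqrt_diag p d c j * block_sqrt_off p d c j + block_sqrt_off p d c j * block_sqrt_diag p d c (p j) = c j"
    "psd2 (block_sqrt_diag p d c j) (block_sqrt_off p d c j) (block_sqrt_diag p d c (p j))"
    using psd2_sqrt2 by (simp_all add: block_sqrt_diag_def block_sqrt_off_def)
qed

lemma blocks_psd_block_sqrt: "blocks_psd p (block_sqrt_diag p d c) (block_sqrt_off p d c)"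
  unfolding blocks_psd_def
proof (intro allI conjI impI)
  fix j
  show "0 \<le> block_sqrt_diag p d c j" if "p j = j"
    using block_sqrt_fixed(1)[OF that] psd that by (simp add: blocks_psd_def)
  show "psd2 (block_sqrt_diag p d c j) (block_sqrt_off p d c j) (block_sqrt_diag p d c (p j))"
    if "p j \<noteq> j" using block_sqrt_pair(3)[OF that] .
qed

lemma block_op_block_sqrt_square:
  "block_op p (block_sqrt_diag p d c) (block_sqrt_off p d c) (block_op p (block_sqrt_diag p d c) (block_sqrt_off p d c) f)
     = block_op p d c f"
proof -
  have diag: "block_sqrt_diag p d c j * block_sqrt_diag p d c j + block_sqrt_off p d c j * block_sqrt_off p d c (p j) = d j" for j
  proof (cases "p j = j")
    case True
    then have "0 \<le> d j" using psd by (simp add: blocks_psd_def)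
    then show ?thesis using block_sqrt_fixed[OF True] by simp
  qed (rule block_sqrt_pair(1))
  have off: "block_sqrt_diag p d c j * block_sqrt_off p d c j + block_sqrt_off p d c j * block_sqrt_diag p d c (p j) = c j" for j
  proof (cases "p j = j")
    case True
    then have "c j = 0" using c by (simp add: symmetric_offdiag_def)
    then show ?thesis using block_sqrt_fixed[OF True] by simp
  qed (rule block_sqrt_pair(2))
  show ?thesis unfolding block_op_comp[OF p] diag off ..
qed

lemma bounded_block_sqrt:
  assumes "bounded (range d)"
  shows "bounded (range (block_sqrt_diag p d c))" "bounded (range (block_sqrt_off p d c))"
proof -
  obtain K where K: "\<And>j. \<bar>d j\<bar> \<le> K" using bounded_ranges_realE[OF assms assms] by blast
  have sum_squares: "(block_sqrt_diag p d c j)\<^sup>2 + (block_sqrt_off p d c j)\<^sup>2 = d j" for j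
  proof (cases "p j = j")
    case True
    then show ?thesis using block_sqrt_fixed psd by (simp add: blocks_psd_def)
  next
    case False
    then show ?thesis using block_sqrt_pair(1)[OF False] symmetric_offdiag_block_sqrt[OF p c]
      by (simp add: power2_eq_square symmetric_offdiag_def)
  qed
  have "(block_sqrt_diag p d c j)\<^sup>2 \<le> K" "(block_sqrt_off p d c j)\<^sup>2 \<le> K" for j
    using sum_squares[of j] abs_le_D1[OF K[of j]] zero_le_power2[of "block_sqrt_off p d c j"]
      zero_le_power2[of "block_sqrt_diag p d c j"] by linarith+
  then have "\<bar>block_sqrt_diag p d c j\<bar> \<le> sqrt K" "\<bar>block_sqrt_off p d c j\<bar> \<le> sqrt K" for j
    using real_sqrt_le_mono by (metis real_sqrt_abs)+
  then show "bounded (range (block_sqrt_diag p d c))" "bounded (range (block_sqrt_off p d c))"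
    unfolding bounded_iff by auto
qed

end

lemma psd2_eigendecomposition:
  assumes "psd2 a b c"
  obtains l m x1 x2 y1 y2 k1 k2 where "0 \<le> l" "0 \<le> m"
    "a * x1 + b * x2 = l * x1" "b * x1 + c * x2 = l * x2"
    "a * y1 + b * y2 = m * y1" "b * y1 + c * y2 = m * y2"
    "k1 * x1 + k2 * y1 = 1" "k1 * x2 + k2 * y2 = 0"
proof (cases "b = 0")
  case True
  then show ?thesis using assms that[of a c 1 0 0 1 1 0] by (simp add: psd2_def)
next
  case False
  have abc: "0 \<le> a" "0 \<le> c" "b\<^sup>2 \<le> a * c" using assms unfolding psd2_def by blast+
  define D where "D = sqrt ((a - c)\<^sup>2 + 4 * b\<^sup>2)"
  have D2: "D\<^sup>2 = (a - c)\<^sup>2 + 4 * b\<^sup>2" unfolding D_def by simp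
  have D0: "D > 0" unfolding D_def using False by (simp add: add_nonneg_pos)
  have "D \<le> sqrt ((a + c)\<^sup>2)"
    unfolding D_def using abc by (intro real_sqrt_le_mono) (simp add: power2_eq_square algebra_simps)
  then have "D \<le> a + c" using abc by simp
  define l where "l = (a + c + D) / 2"
  define m where "m = (a + c - D) / 2"
  have l2: "2 * l = a + c + D" and m2: "2 * m = a + c - D" unfolding l_def m_def by simp_all
  show ?thesis
  proof (rule that[of l m b "l - a" b "m - a" "(a - m) / (b * D)" "(l - a) / (b * D)"])
    show "0 \<le> l" "0 \<le> m" unfolding l_def m_def using abc D0 \<open>D \<le> a + c\<close> by simp_all
    show "b * b + c * (l - a) = l * (l - a)" using D2 l2 by algebra
    show "b * b + c * (m - a) = m * (m - a)" using D2 m2 by algebra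
    show "(a - m) / (b * D) * b + (l - a) / (b * D) * b = 1"
      "(a - m) / (b * D) * (l - a) + (l - a) / (b * D) * (m - a) = 0"
      unfolding l_def m_def using False D0 by (simp_all add: field_simps)
  qed (simp_all add: algebra_simps)
qed

lemma spanned_by_eigenpairs_block_op:
  assumes "involution p" "symmetric_offdiag p c" "blocks_psd p d c"
    and A: "\<And>f. f \<in> ell2 \<Longrightarrow> A f = block_op p d c f"
  shows "spanned_by_eigenpairs A"
  unfolding spanned_by_eigenpairs_def
proof
  fix j
  show "\<exists>V1 V2 l1 l2 k1 k2. V1 \<in> ell2 \<and> V2 \<in> ell2 \<and> 0 \<le> l1 \<and> 0 \<le> l2 \<and>
     A V1 = (\<lambda>i. complex_of_real l1 * V1 i) \<and> A V2 = (\<lambda>i. complex_of_real l2 * V2 i) \<and>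
     unit_vec j = (\<lambda>i. k1 * V1 i + k2 * V2 i)"
  proof (cases "p j = j")
    case True
    then have "0 \<le> d j" "A (unit_vec j) = (\<lambda>i. complex_of_real (d j) * unit_vec j i)"
      using assms(3) A[OF unit_vec_ell2] block_op_unit_vec_fixed[OF assms(2) True]
      by (simp_all add: blocks_psd_def)
    then show ?thesis using unit_vec_ell2
      by (rule_tac x="unit_vec j" in exI, rule_tac x="unit_vec j" in exI, rule_tac x="d j" in exI,
          rule_tac x="d j" in exI, rule_tac x=1 in exI, rule_tac x=0 in exI) simp
  next
    case False
    let ?V = "\<lambda>z1 z2 i. complex_of_real z1 * unit_vec j i + complex_of_real z2 * unit_vec (p j) i"
    have V: "?V z1 z2 \<in> ell2" for z1 z2 by (intro ell2_add ell2_scale unit_vec_ell2)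
    have eigen: "A (?V z1 z2) = (\<lambda>i. complex_of_real e * ?V z1 z2 i)"
      if "d j * z1 + c j * z2 = e * z1" "c j * z1 + d (p j) * z2 = e * z2" for z1 z2 e
      unfolding A[OF V] using block_op_pair_eigenvector[OF assms(1,2) that] .
    have "psd2 (d j) (c j) (d (p j))" using assms(3) False by (simp add: blocks_psd_def)
    then obtain l m x1 x2 y1 y2 k1 k2 where E: "0 \<le> l" "0 \<le> m"
      "d j * x1 + c j * x2 = l * x1" "c j * x1 + d (p j) * x2 = l * x2"
      "d j * y1 + c j * y2 = m * y1" "c j * y1 + d (p j) * y2 = m * y2"
      "k1 * x1 + k2 * y1 = 1" "k1 * x2 + k2 * y2 = 0"
      by (rule psd2_eigendecomposition)
    have "unit_vec j = (\<lambda>i. complex_of_real k1 * ?V x1 x2 i + complex_of_real k2 * ?V y1 y2 i)"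
    proof
      fix i
      have "complex_of_real k1 * ?V x1 x2 i + complex_of_real k2 * ?V y1 y2 i =
        complex_of_real (k1 * x1 + k2 * y1) * unit_vec j i + complex_of_real (k1 * x2 + k2 * y2) * unit_vec (p j) i"
        by (simp add: algebra_simps)
      then show "unit_vec j i = complex_of_real k1 * ?V x1 x2 i + complex_of_real k2 * ?V y1 y2 i"
        using E(7,8) False by (simp add: unit_vec_def)
    qed
    then show ?thesis using V E(1,2) eigen[OF E(3,4)] eigen[OF E(5,6)] by blast
  qed
qed

lemma op_sqrt_block_op:
  assumes "involution p" "symmetric_offdiag p c" "blocks_psd p d c" "bounded (range d)"
    and A: "\<And>f. f \<in> ell2 \<Longrightarrow> A f = block_op p d c f"
  shows "op_sqrt A = (\<lambda>f. if f \<in> ell2 then block_op p (block_sqrt_diag p d c) (block_sqrt_off p d c) f else (\<lambda>_. 0))"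
    (is "_ = ?S")
proof (rule op_sqrt_eqI)
  show "spanned_by_eigenpairs A" by (rule spanned_by_eigenpairs_block_op[OF assms(1-3) A])
  note bounded = bounded_block_sqrt[OF assms(1-4)]
  have "positive_op (block_op p (block_sqrt_diag p d c) (block_sqrt_off p d c))"
    using positive_block_op_iff[OF assms(1) bounded symmetric_offdiag_block_sqrt[OF assms(1,2)]]
      blocks_psd_block_sqrt[OF assms(1-3)] by simp
  then show "positive_op ?S" by (subst positive_op_cong[where B="block_op p _ _"]) auto
  show "?S f = (\<lambda>_. 0)" if "f \<notin> ell2" for f using that by simp
  show "?S (?S f) = A f" if "f \<in> ell2" for f
    using that block_op_ell2[OF assms(1) bounded that] block_op_block_sqrt_square[OF assms(1-3)] A
    by simp
qed


section \<open>Weighted shifts\<close>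

text \<open>\<open>inj_shift \<sigma> \<tau> w\<close> maps \<open>e\<^sub>m\<close> to \<open>w m e\<^sub>\<sigma>\<^sub>m\<close>; \<open>\<tau>\<close> is a left inverse of \<open>\<sigma>\<close>.\<close>

definition inj_shift :: "('i \<Rightarrow> 'i) \<Rightarrow> ('i \<Rightarrow> 'i) \<Rightarrow> ('i \<Rightarrow> real) \<Rightarrow> ('i \<Rightarrow> complex) \<Rightarrow> ('i \<Rightarrow> complex)" where
  "inj_shift \<sigma> \<tau> w f = (\<lambda>k. if k \<in> range \<sigma> then complex_of_real (w (\<tau> k)) * f (\<tau> k) else 0)"

definition inj_shift_adj :: "('i \<Rightarrow> 'i) \<Rightarrow> ('i \<Rightarrow> real) \<Rightarrow> ('i \<Rightarrow> complex) \<Rightarrow> ('i \<Rightarrow> complex)" where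
  "inj_shift_adj \<sigma> w g = (\<lambda>m. complex_of_real (w m) * g (\<sigma> m))"

locale bounded_inj_shift =
  fixes \<sigma> \<tau> :: "'i \<Rightarrow> 'i" and w :: "'i \<Rightarrow> real"
  assumes left_inverse: "\<And>m. \<tau> (\<sigma> m) = m" and bounded_weights: "bounded (range w)"
begin

lemma inj: "inj \<sigma>"
  by (metis injI left_inverse)

lemma ell2_weighted:
  assumes "f \<in> ell2" shows "(\<lambda>m. complex_of_real (w m) * f m) \<in> ell2"
proof -
  obtain K where K: "\<And>m. \<bar>w m\<bar> \<le> K"
    using bounded_ranges_realE[OF bounded_weights bounded_weights] by blast
  then have "0 \<le> K" using abs_ge_zero order_trans by blast
  show ?thesis
  proof (rule ell2_dominated(1))
    show "(\<lambda>m. complex_of_real K * f m) \<in> ell2" using assms by (rule ell2_scale)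
    show "cmod (complex_of_real (w m) * f m) \<le> cmod (complex_of_real K * f m)" for m
      using K \<open>0 \<le> K\<close> by (simp add: norm_mult mult_right_mono)
  qed
qed

lemma inj_shift_ell2:
  assumes "f \<in> ell2" shows "inj_shift \<sigma> \<tau> w f \<in> ell2"
proof -
  have "(\<lambda>k. (cmod (inj_shift \<sigma> \<tau> w f k))\<^sup>2) summable_on UNIV \<longleftrightarrow>
      (\<lambda>k. (cmod (inj_shift \<sigma> \<tau> w f k))\<^sup>2) summable_on range \<sigma>"
    by (rule summable_on_cong_neutral) (auto simp: inj_shift_def)
  also have "\<dots> \<longleftrightarrow> (\<lambda>m. (cmod (inj_shift \<sigma> \<tau> w f (\<sigma> m)))\<^sup>2) summable_on UNIV"
    using summable_on_reindex[OF inj, of "\<lambda>k. (cmod (inj_shift \<sigma> \<tau> w f k))\<^sup>2"] by (simp add: o_def)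
  also have "\<dots> \<longleftrightarrow> (\<lambda>m. (cmod (complex_of_real (w m) * f m))\<^sup>2) summable_on UNIV"
    by (simp add: inj_shift_def left_inverse)
  finally show ?thesis using ell2_weighted[OF assms] by (simp add: ell2_def)
qed

lemma inj_shift_adj_ell2:
  assumes "g \<in> ell2" shows "inj_shift_adj \<sigma> w g \<in> ell2"
  unfolding inj_shift_adj_def
  using ell2_weighted[OF ell2_reindex_inj[OF inj assms]] by (simp add: o_def)

lemma ip_inj_shift:
  assumes "f \<in> ell2" "g \<in> ell2"
  shows "ip (inj_shift \<sigma> \<tau> w f) g = ip f (inj_shift_adj \<sigma> w g)"
proof -
  have "ip (inj_shift \<sigma> \<tau> w f) g = infsum (\<lambda>k. inj_shift \<sigma> \<tau> w f k * cnj (g k)) (range \<sigma>)"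
    unfolding ip_def by (rule infsum_cong_neutral) (auto simp: inj_shift_def)
  also have "\<dots> = infsum (\<lambda>m. inj_shift \<sigma> \<tau> w f (\<sigma> m) * cnj (g (\<sigma> m))) UNIV"
    using infsum_reindex[OF inj] by (simp add: o_def)
  also have "\<dots> = ip f (inj_shift_adj \<sigma> w g)"
    unfolding ip_def by (simp add: inj_shift_def inj_shift_adj_def left_inverse mult.assoc mult.left_commute)
  finally show ?thesis .
qed

lemma adj_inj_shift: "adj (inj_shift \<sigma> \<tau> w) = (\<lambda>g. if g \<in> ell2 then inj_shift_adj \<sigma> w g else (\<lambda>_. 0))"
  by (rule adj_eqI) (auto simp: inj_shift_adj_ell2 ip_inj_shift)

end

lemma shift1_eq_inj_shift: "shift1 w = inj_shift (\<lambda>(m1, m2). (Suc m1, m2)) (\<lambda>(k1, k2). (k1 - 1, k2)) w"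
proof -
  have "(k1, k2) \<in> range (\<lambda>(m1, m2). (Suc m1, m2)) \<longleftrightarrow> k1 \<noteq> 0" for k1 k2 :: nat
    by (auto simp: image_iff) (metis Suc_pred)
  then show ?thesis by (auto simp: fun_eq_iff shift1_def inj_shift_def)
qed

lemma shift2_eq_inj_shift: "shift2 w = inj_shift (\<lambda>(m1, m2). (m1, Suc m2)) (\<lambda>(k1, k2). (k1, k2 - 1)) w"
proof -
  have "(k1, k2) \<in> range (\<lambda>(m1, m2). (m1, Suc m2)) \<longleftrightarrow> k2 \<noteq> 0" for k1 k2 :: nat
    by (auto simp: image_iff) (metis Suc_pred)
  then show ?thesis by (auto simp: fun_eq_iff shift2_def inj_shift_def)
qed

context
  fixes w :: "nat \<times> nat \<Rightarrow> real"
  assumes w: "bounded (range w)"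
begin

interpretation S1: bounded_inj_shift "\<lambda>(m1, m2). (Suc m1, m2)" "\<lambda>(k1, k2). (k1 - 1, k2)" w
  by unfold_locales (auto simp: w)

interpretation S2: bounded_inj_shift "\<lambda>(m1, m2). (m1, Suc m2)" "\<lambda>(k1, k2). (k1, k2 - 1)" w
  by unfold_locales (auto simp: w)

lemma shift1_ell2: "f \<in> ell2 \<Longrightarrow> shift1 w f \<in> ell2"
  unfolding shift1_eq_inj_shift by (rule S1.inj_shift_ell2)

lemma shift2_ell2: "f \<in> ell2 \<Longrightarrow> shift2 w f \<in> ell2"
  unfolding shift2_eq_inj_shift by (rule S2.inj_shift_ell2)

lemma adj_shift1:
  "adj (shift1 w) = (\<lambda>g. if g \<in> ell2 then (\<lambda>(m1, m2). complex_of_real (w (m1, m2)) * g (Suc m1, m2)) else (\<lambda>_. 0))"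
  unfolding shift1_eq_inj_shift S1.adj_inj_shift by (auto simp: inj_shift_adj_def fun_eq_iff)

lemma adj_shift2:
  "adj (shift2 w) = (\<lambda>g. if g \<in> ell2 then (\<lambda>(m1, m2). complex_of_real (w (m1, m2)) * g (m1, Suc m2)) else (\<lambda>_. 0))"
  unfolding shift2_eq_inj_shift S2.adj_inj_shift by (auto simp: inj_shift_adj_def fun_eq_iff)

end


text \<open>Both operator matrices couple the coordinate \<open>e\<^sub>k\<close> of the first summand only with the
  coordinate \<open>e\<^sub>k\<^sub>'\<close>, \<open>k' = k - (1, 0) + (0, 1)\<close>, of the second one.\<close>

fun antidiag_pair :: "(nat \<times> nat) + (nat \<times> nat) \<Rightarrow> (nat \<times> nat) + (nat \<times> nat)" where
  "antidiag_pair (Inl (k1, k2)) = (if k1 = 0 then Inl (k1, k2) else Inr (k1 - 1, k2 + 1))"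
| "antidiag_pair (Inr (j1, j2)) = (if j2 = 0 then Inr (j1, j2) else Inl (j1 + 1, j2 - 1))"

lemma involution_antidiag_pair: "involution antidiag_pair"
  unfolding involution_def by (intro allI, case_tac j rule: antidiag_pair.cases) auto

fun L_diag :: "(nat \<times> nat \<Rightarrow> real) \<Rightarrow> (nat \<times> nat \<Rightarrow> real) \<Rightarrow> (nat \<times> nat) + (nat \<times> nat) \<Rightarrow> real" where
  "L_diag al be (Inl k) = (al k)\<^sup>2"
| "L_diag al be (Inr j) = (be j)\<^sup>2"

fun L_off :: "(nat \<times> nat \<Rightarrow> real) \<Rightarrow> (nat \<times> nat \<Rightarrow> real) \<Rightarrow> (nat \<times> nat) + (nat \<times> nat) \<Rightarrow> real" where
  "L_off al be (Inl (k1, k2)) = (if k1 = 0 then 0 else be (k1, k2) * al (k1 - 1, k2 + 1))"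
| "L_off al be (Inr (j1, j2)) = (if j2 = 0 then 0 else be (j1 + 1, j2 - 1) * al (j1, j2))"

fun R_diag :: "(nat \<times> nat \<Rightarrow> real) \<Rightarrow> (nat \<times> nat \<Rightarrow> real) \<Rightarrow> (nat \<times> nat) + (nat \<times> nat) \<Rightarrow> real" where
  "R_diag al be (Inl (k1, k2)) = (if k1 = 0 then 0 else (al (k1 - 1, k2))\<^sup>2)"
| "R_diag al be (Inr (j1, j2)) = (if j2 = 0 then 0 else (be (j1, j2 - 1))\<^sup>2)"

fun R_off :: "(nat \<times> nat \<Rightarrow> real) \<Rightarrow> (nat \<times> nat \<Rightarrow> real) \<Rightarrow> (nat \<times> nat) + (nat \<times> nat) \<Rightarrow> real" where
  "R_off al be (Inl (k1, k2)) = (if k1 = 0 then 0 else al (k1 - 1, k2) * be (k1 - 1, k2))"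
| "R_off al be (Inr (j1, j2)) = (if j2 = 0 then 0 else al (j1, j2 - 1) * be (j1, j2 - 1))"

lemma symmetric_offdiag_L_off: "symmetric_offdiag antidiag_pair (L_off al be)"
  and symmetric_offdiag_R_off: "symmetric_offdiag antidiag_pair (R_off al be)"
  unfolding symmetric_offdiag_def
  by (intro allI conjI impI; case_tac j rule: antidiag_pair.cases; auto split: if_splits)+

lemma blocks_psd_R: "blocks_psd antidiag_pair (R_diag al be) (R_off al be)"
  unfolding blocks_psd_def
  by (intro allI conjI impI; case_tac j rule: antidiag_pair.cases) (auto simp: psd2_def power_mult_distrib)

lemma bounded_block_coeffs:
  assumes "bounded (range al)" "bounded (range be)"
  shows "bounded (range (L_diag al be))" "bounded (range (L_off al be))"
    "bounded (range (R_diag al be))" "bounded (range (R_off al be))"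
proof -
  obtain K where K: "\<And>m. \<bar>al m\<bar> \<le> K" "\<And>m. \<bar>be m\<bar> \<le> K"
    using bounded_ranges_realE[OF assms] by blast
  have prod: "\<bar>u * v\<bar> \<le> K * K" if "\<bar>u\<bar> \<le> K" "\<bar>v\<bar> \<le> K" for u v :: real
    using that by (simp add: abs_mult mult_mono')
  have square: "u\<^sup>2 \<le> K * K" if "\<bar>u\<bar> \<le> K" for u :: real
    using prod[OF that that] by (simp add: power2_eq_square)
  have "\<bar>L_diag al be j\<bar> \<le> K * K" for j
    by (cases j) (simp_all add: square K)
  moreover have "\<bar>R_diag al be j\<bar> \<le> K * K" for j
    by (cases j rule: antidiag_pair.cases) (simp_all add: square K)
  moreover have "\<bar>L_off al be j\<bar> \<le> K * K" for j
    using prod[OF K(1) K(2)] prod[OF K(2) K(1)] by (cases j rule: antidiag_pair.cases) simp_all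
  moreover have "\<bar>R_off al be j\<bar> \<le> K * K" for j
    using prod[OF K(1) K(2)] prod[OF K(2) K(1)] by (cases j rule: antidiag_pair.cases) simp_all
  ultimately show "bounded (range (L_diag al be))" "bounded (range (L_off al be))"
    "bounded (range (R_diag al be))" "bounded (range (R_off al be))"
    unfolding bounded_iff by auto
qed


definition sqrt_gap_diag :: "(nat \<times> nat \<Rightarrow> real) \<Rightarrow> (nat \<times> nat \<Rightarrow> real) \<Rightarrow> (nat \<times> nat) + (nat \<times> nat) \<Rightarrow> real" where
  "sqrt_gap_diag al be j = block_sqrt_diag antidiag_pair (L_diag al be) (L_off al be) j
     - block_sqrt_diag antidiag_pair (R_diag al be) (R_off al be) j"

definition sqrt_gap_off :: "(nat \<times> nat \<Rightarrow> real) \<Rightarrow> (nat \<times> nat \<Rightarrow> real) \<Rightarrow> (nat \<times> nat) + (nat \<times> nat) \<Rightarrow> real" where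
  "sqrt_gap_off al be j = block_sqrt_off antidiag_pair (L_diag al be) (L_off al be) j
     - block_sqrt_off antidiag_pair (R_diag al be) (R_off al be) j"

context
  fixes al be :: "nat \<times> nat \<Rightarrow> real"
  assumes al: "bounded (range al)" and be: "bounded (range be)"
begin

lemma opmat_L_eq_block_op:
  assumes f: "f \<in> ell2"
  shows "opmat (adj (shift1 al) \<circ> shift1 al) (adj (shift2 be) \<circ> shift1 al)
                (adj (shift1 al) \<circ> shift2 be) (adj (shift2 be) \<circ> shift2 be) f
       = block_op antidiag_pair (L_diag al be) (L_off al be) f"
proof
  fix j
  have "f \<circ> Inl \<in> ell2" "f \<circ> Inr \<in> ell2" using f by (simp_all add: ell2_reindex_inj)
  then have "shift1 al (f \<circ> Inl) \<in> ell2" "shift1 al (f \<circ> Inr) \<in> ell2"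
    "shift2 be (f \<circ> Inl) \<in> ell2" "shift2 be (f \<circ> Inr) \<in> ell2"
    using shift1_ell2[OF al] shift2_ell2[OF be] by blast+
  then show "opmat (adj (shift1 al) \<circ> shift1 al) (adj (shift2 be) \<circ> shift1 al)
                (adj (shift1 al) \<circ> shift2 be) (adj (shift2 be) \<circ> shift2 be) f j
      = block_op antidiag_pair (L_diag al be) (L_off al be) f j"
    by (cases j rule: antidiag_pair.cases)
      (auto simp: opmat_def adj_shift1[OF al] adj_shift2[OF be] block_op_def shift1_def shift2_def
        power2_eq_square)
qed

lemma opmat_R_eq_block_op:
  assumes f: "f \<in> ell2"
  shows "opmat (shift1 al \<circ> adj (shift1 al)) (shift1 al \<circ> adj (shift2 be))
                (shift2 be \<circ> adj (shift1 al)) (shift2 be \<circ> adj (shift2 be)) f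
       = block_op antidiag_pair (R_diag al be) (R_off al be) f"
proof
  fix j
  have "f \<circ> Inl \<in> ell2" "f \<circ> Inr \<in> ell2" using f by (simp_all add: ell2_reindex_inj)
  then show "opmat (shift1 al \<circ> adj (shift1 al)) (shift1 al \<circ> adj (shift2 be))
                (shift2 be \<circ> adj (shift1 al)) (shift2 be \<circ> adj (shift2 be)) f j
      = block_op antidiag_pair (R_diag al be) (R_off al be) f j"
    by (cases j rule: antidiag_pair.cases)
      (auto simp: opmat_def adj_shift1[OF al] adj_shift2[OF be] block_op_def shift1_def shift2_def
        power2_eq_square)
qed

text \<open>\<open>\<surd>L\<close> and \<open>\<surd>R\<close> are the block operators of the blockwise square roots, so their
  difference is the block operator with coefficients \<open>sqrt_gap_diag\<close> and \<open>sqrt_gap_off\<close>.\<close>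

lemma semi_hyponormal_iff_blocks_psd:
  assumes psd_L: "blocks_psd antidiag_pair (L_diag al be) (L_off al be)"
  shows "semi_hyponormal (shift1 al) (shift2 be) \<longleftrightarrow>
    blocks_psd antidiag_pair (sqrt_gap_diag al be) (sqrt_gap_off al be)"
proof -
  let ?p = antidiag_pair
  let ?L = "opmat (adj (shift1 al) \<circ> shift1 al) (adj (shift2 be) \<circ> shift1 al)
                (adj (shift1 al) \<circ> shift2 be) (adj (shift2 be) \<circ> shift2 be)"
  let ?R = "opmat (shift1 al \<circ> adj (shift1 al)) (shift1 al \<circ> adj (shift2 be))
                (shift2 be \<circ> adj (shift1 al)) (shift2 be \<circ> adj (shift2 be))"
  let ?dL = "block_sqrt_diag ?p (L_diag al be) (L_off al be)"
  let ?cL = "block_sqrt_off ?p (L_diag al be) (L_off al be)"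
  let ?dR = "block_sqrt_diag ?p (R_diag al be) (R_off al be)"
  let ?cR = "block_sqrt_off ?p (R_diag al be) (R_off al be)"
  note p = involution_antidiag_pair
  note bounded = bounded_block_coeffs[OF al be]
  have pos_L: "positive_op ?L"
    using positive_op_cong[of ?L, OF opmat_L_eq_block_op]
      positive_block_op_iff[OF p bounded(1,2) symmetric_offdiag_L_off] psd_L by simp
  have sqrt_L: "op_sqrt ?L = (\<lambda>f. if f \<in> ell2 then block_op ?p ?dL ?cL f else (\<lambda>_. 0))"
    by (rule op_sqrt_block_op[OF p symmetric_offdiag_L_off psd_L bounded(1) opmat_L_eq_block_op])
  have sqrt_R: "op_sqrt ?R = (\<lambda>f. if f \<in> ell2 then block_op ?p ?dR ?cR f else (\<lambda>_. 0))"
    by (rule op_sqrt_block_op[OF p symmetric_offdiag_R_off blocks_psd_R bounded(3) opmat_R_eq_block_op])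
  have "op_le (op_sqrt ?R) (op_sqrt ?L) \<longleftrightarrow>
      positive_op (block_op ?p (\<lambda>j. ?dL j - ?dR j) (\<lambda>j. ?cL j - ?cR j))"
    unfolding op_le_def sqrt_L sqrt_R by (intro positive_op_cong) (simp add: block_op_diff)
  also have "\<dots> \<longleftrightarrow> blocks_psd ?p (\<lambda>j. ?dL j - ?dR j) (\<lambda>j. ?cL j - ?cR j)"
  proof (rule positive_block_op_iff[OF p])
    note L = bounded_block_sqrt[OF p symmetric_offdiag_L_off psd_L bounded(1)]
    note R = bounded_block_sqrt[OF p symmetric_offdiag_R_off blocks_psd_R bounded(3)]
    show "bounded (range (\<lambda>j. ?dL j - ?dR j))" using bounded_minus_comp[OF L(1) R(1)] .
    show "bounded (range (\<lambda>j. ?cL j - ?cR j))" using bounded_minus_comp[OF L(2) R(2)] .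
    show "symmetric_offdiag ?p (\<lambda>j. ?cL j - ?cR j)"
      using symmetric_offdiag_block_sqrt[OF p symmetric_offdiag_L_off]
        symmetric_offdiag_block_sqrt[OF p symmetric_offdiag_R_off]
      by (simp add: symmetric_offdiag_def)
  qed
  finally show ?thesis using pos_L
    unfolding semi_hyponormal_def Let_def sqrt_gap_diag_def[abs_def] sqrt_gap_off_def[abs_def] by simp
qed

end


section \<open>The gap between the square roots of two \<open>2\<times>2\<close> blocks\<close>

lemma sqrt2_unit_diagonal:
  fixes u :: real assumes "0 < u" "u < 1"
  shows "sqrt2_diag 1 u 1 = (sqrt (1 + u) + sqrt (1 - u)) / 2"
    "sqrt2_off 1 u 1 = (sqrt (1 + u) - sqrt (1 - u)) / 2"
proof -
  define P where "P = sqrt (1 + u)"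
  define Q where "Q = sqrt (1 - u)"
  have P: "P\<^sup>2 = 1 + u" "P > 0" and Q: "Q\<^sup>2 = 1 - u" "Q > 0" using assms by (simp_all add: P_def Q_def)
  have s: "sqrt (1 * 1 - u\<^sup>2) = P * Q"
    unfolding P_def Q_def by (simp add: real_sqrt_mult[symmetric] power2_eq_square algebra_simps)
  have "(P + Q)\<^sup>2 = 1 + 1 + 2 * (P * Q)" using P Q by (simp add: power2_sum)
  then have t: "sqrt (1 + 1 + 2 * (P * Q)) = P + Q" using P Q by (metis add_pos_pos real_sqrt_abs abs_of_pos)
  have "2 * (1 + P * Q) = (P + Q) * (P + Q)" "2 * u = (P - Q) * (P + Q)"
    using P Q by (simp_all add: power2_eq_square algebra_simps)
  then have "(1 + P * Q) / (P + Q) = (P + Q) / 2" "u / (P + Q) = (P - Q) / 2"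
    using P(2) Q(2) by (simp_all add: field_simps)
  moreover have "sqrt2_diag 1 u 1 = (1 + P * Q) / (P + Q)" "sqrt2_off 1 u 1 = u / (P + Q)"
    unfolding sqrt2_diag_def sqrt2_off_def s t by simp_all
  ultimately show "sqrt2_diag 1 u 1 = (sqrt (1 + u) + sqrt (1 - u)) / 2"
    "sqrt2_off 1 u 1 = (sqrt (1 + u) - sqrt (1 - u)) / 2"
    unfolding P_def Q_def by simp_all
qed

lemma sqrt2_rank_one:
  fixes x y :: real assumes "0 < x" "0 < y"
  shows "sqrt2_diag (x\<^sup>2) (x * y) (y\<^sup>2) = x\<^sup>2 / sqrt (x\<^sup>2 + y\<^sup>2)"
    "sqrt2_diag (y\<^sup>2) (x * y) (x\<^sup>2) = y\<^sup>2 / sqrt (x\<^sup>2 + y\<^sup>2)"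
    "sqrt2_off (x\<^sup>2) (x * y) (y\<^sup>2) = x * y / sqrt (x\<^sup>2 + y\<^sup>2)"
  unfolding sqrt2_diag_def sqrt2_off_def by (simp_all add: power_mult_distrib algebra_simps)

text \<open>The square root of \<open>[[1, u], [u, 1]]\<close> dominates that of the rank-one matrix \<open>(x, y)\<^sup>T (x, y)\<close>
  iff the determinant of the difference is nonnegative; after clearing the positive factor
  \<open>2 \<surd>(x\<^sup>2 + y\<^sup>2) / \<surd>(1 - u)\<close> this determinant condition reads as follows.\<close>

lemma psd2_sqrt2_gap_iff:
  fixes u x y :: real
  assumes u: "0 < u" "u < 1" and xy: "0 < x" "0 < y" "x\<^sup>2 + y\<^sup>2 < 2"
  shows "psd2 (sqrt2_diag 1 u 1 - sqrt2_diag (x\<^sup>2) (x * y) (y\<^sup>2)) (sqrt2_off 1 u 1 - sqrt2_off (x\<^sup>2) (x * y) (y\<^sup>2))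
           (sqrt2_diag 1 u 1 - sqrt2_diag (y\<^sup>2) (x * y) (x\<^sup>2))
     \<longleftrightarrow> (x + y)\<^sup>2 + sqrt (1 + u) / sqrt (1 - u) * (x - y)\<^sup>2 \<le> 2 * sqrt (x\<^sup>2 + y\<^sup>2) * sqrt (1 + u)"
proof -
  define P where "P = sqrt (1 + u)"
  define Q where "Q = sqrt (1 - u)"
  define n where "n = sqrt (x\<^sup>2 + y\<^sup>2)"
  have P: "P\<^sup>2 = 1 + u" "P > 0" and Q: "Q\<^sup>2 = 1 - u" "Q > 0" using u by (simp_all add: P_def Q_def)
  have n: "n\<^sup>2 = x\<^sup>2 + y\<^sup>2" "n > 0" unfolding n_def using xy by (simp_all add: add_pos_pos)
  define A1 where "A1 = (P + Q) / 2 - x\<^sup>2 / n"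
  define A2 where "A2 = (P + Q) / 2 - y\<^sup>2 / n"
  define B where "B = (P - Q) / 2 - x * y / n"
  have entries: "sqrt2_diag 1 u 1 - sqrt2_diag (x\<^sup>2) (x * y) (y\<^sup>2) = A1"
    "sqrt2_off 1 u 1 - sqrt2_off (x\<^sup>2) (x * y) (y\<^sup>2) = B"
    "sqrt2_diag 1 u 1 - sqrt2_diag (y\<^sup>2) (x * y) (x\<^sup>2) = A2"
    using sqrt2_unit_diagonal[OF u] sqrt2_rank_one[OF xy(1,2)]
    by (simp_all add: A1_def A2_def B_def P_def Q_def n_def)
  have "A1 * A2 - B\<^sup>2 = ((P + Q)\<^sup>2 - (P - Q)\<^sup>2) / 4 - (P + Q) * (x\<^sup>2 + y\<^sup>2) / (2 * n) + (P - Q) * x * y / n"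
    unfolding A1_def A2_def B_def using n(2) by (simp add: field_simps power2_eq_square)
  also have "\<dots> = P * Q - (P + Q) * n / 2 + (P - Q) * x * y / n"
    unfolding n(1)[symmetric] using n(2) by (simp add: field_simps power2_eq_square)
  finally have "(2 * n / Q) * (A1 * A2 - B\<^sup>2) = (2 * n / Q) * (P * Q - (P + Q) * n / 2 + (P - Q) * x * y / n)"
    by simp
  also have "\<dots> = 2 * n * P - (P + Q) * n\<^sup>2 / Q + 2 * (P - Q) * x * y / Q"
    using n(2) Q(2) by (simp add: field_simps power2_eq_square)
  also have "\<dots> = 2 * n * P - ((x + y)\<^sup>2 + P / Q * (x - y)\<^sup>2)"
    unfolding n(1) using Q(2) by (simp add: field_simps power2_eq_square)
  finally have det: "(2 * n / Q) * (A1 * A2 - B\<^sup>2) = 2 * n * P - ((x + y)\<^sup>2 + P / Q * (x - y)\<^sup>2)" .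
  have "n < P + Q"
  proof -
    have "(P + Q)\<^sup>2 = 2 + 2 * (P * Q)" using P Q by (simp add: power2_sum)
    then have "n\<^sup>2 < (P + Q)\<^sup>2" using n(1) xy(3) mult_pos_pos[OF P(2) Q(2)] by linarith
    then show ?thesis by (rule power_less_imp_less_base) (use P(2) Q(2) in linarith)
  qed
  moreover have "A1 + A2 = P + Q - (x\<^sup>2 + y\<^sup>2) / n" unfolding A1_def A2_def using n(2)
    by (simp add: field_simps)
  moreover have "(x\<^sup>2 + y\<^sup>2) / n = n" unfolding n(1)[symmetric] using n(2) by (simp add: power2_eq_square)
  ultimately have trace: "A1 + A2 > 0" by simp
  have "psd2 A1 B A2 \<longleftrightarrow> 0 \<le> A1 * A2 - B\<^sup>2" using trace by (rule psd2_iff_det_nonneg)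
  also have "\<dots> \<longleftrightarrow> 0 \<le> (2 * n / Q) * (A1 * A2 - B\<^sup>2)"
    using mult_le_cancel_left_pos[of "2 * n / Q" 0 "A1 * A2 - B\<^sup>2"] n(2) Q(2) by simp
  also have "\<dots> \<longleftrightarrow> (x + y)\<^sup>2 + P / Q * (x - y)\<^sup>2 \<le> 2 * n * P" unfolding det by simp
  finally show ?thesis unfolding entries P_def Q_def n_def .
qed

text \<open>The case where the rank-one matrix is \<open>(u, 1)\<^sup>T (u, 1)\<close>: with \<open>P = \<surd>(1 + u)\<close>, \<open>Q = \<surd>(1 - u)\<close>
  the inequality becomes \<open>P\<^sup>3 + Q\<^sup>3 \<le> 2 \<surd>(1 + u\<^sup>2)\<close>, and \<open>(P\<^sup>3 + Q\<^sup>3)\<^sup>2 = 2 + 6 u\<^sup>2 + 2 (PQ)\<^sup>3\<close> with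
  \<open>(PQ)\<^sup>2 = 1 - u\<^sup>2 \<le> 1\<close>.\<close>

lemma sqrt2_gap_ineq_diagonal_weight:
  fixes u :: real assumes "0 < u" "u < 1"
  shows "(u + 1)\<^sup>2 + sqrt (1 + u) / sqrt (1 - u) * (u - 1)\<^sup>2 \<le> 2 * sqrt (u\<^sup>2 + 1\<^sup>2) * sqrt (1 + u)"
proof -
  define P where "P = sqrt (1 + u)"
  define Q where "Q = sqrt (1 - u)"
  define n where "n = sqrt (u\<^sup>2 + 1)"
  have P: "P\<^sup>2 = 1 + u" "P > 0" and Q: "Q\<^sup>2 = 1 - u" "Q > 0" using assms by (simp_all add: P_def Q_def)
  have n: "n\<^sup>2 = u\<^sup>2 + 1" "n > 0" unfolding n_def by (simp_all add: add_nonneg_pos)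
  have PQ: "(P * Q)\<^sup>2 = 1 - u\<^sup>2" unfolding power_mult_distrib P Q by (simp add: power2_eq_square algebra_simps)
  then have "P * Q \<le> 1" using P(2) Q(2) by (simp add: power2_le_imp_le[of "P * Q" 1])
  then have "(P * Q)^3 \<le> (P * Q)\<^sup>2"
    using P(2) Q(2) by (simp add: power3_eq_cube power2_eq_square mult_left_le)
  have "(P^3 + Q^3)\<^sup>2 = (P\<^sup>2)^3 + (Q\<^sup>2)^3 + 2 * (P * Q)^3"
    by (simp add: power2_eq_square power3_eq_cube algebra_simps)
  also have "\<dots> \<le> 2 + 6 * u\<^sup>2 + 2 * (1 - u\<^sup>2)"
    using \<open>(P * Q)^3 \<le> (P * Q)\<^sup>2\<close> PQ unfolding P Q by (simp add: power2_eq_square power3_eq_cube algebra_simps)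
  also have "\<dots> = (2 * n)\<^sup>2" using n by (simp add: power_mult_distrib)
  finally have "P^3 + Q^3 \<le> 2 * n" by (rule power2_le_imp_le) (use n(2) in simp)
  have "(u + 1)\<^sup>2 + P / Q * (u - 1)\<^sup>2 = P * (P^3 + Q^3)"
  proof -
    have "P * P^3 = (P\<^sup>2)\<^sup>2" "Q * Q^3 = (Q\<^sup>2)\<^sup>2" by (simp_all add: power2_eq_square power3_eq_cube mult_ac)
    then have "(u + 1)\<^sup>2 = P * P^3" "(u - 1)\<^sup>2 = Q * Q^3"
      unfolding P(1) Q(1) by (simp_all add: add.commute power2_commute)
    then show ?thesis using Q(2) by (simp add: field_simps)
  qed
  also have "\<dots> \<le> P * (2 * n)" using \<open>P^3 + Q^3 \<le> 2 * n\<close> P(2) by simp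
  finally show ?thesis unfolding P_def Q_def n_def by (simp add: mult_ac)
qed


lemma blocks_psd_antidiag_pair_iff:
  assumes "symmetric_offdiag antidiag_pair c"
  shows "blocks_psd antidiag_pair d c \<longleftrightarrow>
    (\<forall>k. 0 \<le> d (Inl (0, k)) \<and> 0 \<le> d (Inr (k, 0))) \<and>
    (\<forall>k1 k2. psd2 (d (Inl (Suc k1, k2))) (c (Inl (Suc k1, k2))) (d (Inr (k1, Suc k2))))"
proof
  assume psd: "blocks_psd antidiag_pair d c"
  have "0 \<le> d (Inl (0, k))" "0 \<le> d (Inr (k, 0))" for k
    using psd[unfolded blocks_psd_def, rule_format, of "Inl (0, k)"]
      psd[unfolded blocks_psd_def, rule_format, of "Inr (k, 0)"] by simp_all
  moreover have "psd2 (d (Inl (Suc k1, k2))) (c (Inl (Suc k1, k2))) (d (Inr (k1, Suc k2)))" for k1 k2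
    using psd[unfolded blocks_psd_def, rule_format, of "Inl (Suc k1, k2)"] by simp
  ultimately show "(\<forall>k. 0 \<le> d (Inl (0, k)) \<and> 0 \<le> d (Inr (k, 0))) \<and>
      (\<forall>k1 k2. psd2 (d (Inl (Suc k1, k2))) (c (Inl (Suc k1, k2))) (d (Inr (k1, Suc k2))))"
    by blast
next
  assume fixed_pairs: "(\<forall>k. 0 \<le> d (Inl (0, k)) \<and> 0 \<le> d (Inr (k, 0))) \<and>
      (\<forall>k1 k2. psd2 (d (Inl (Suc k1, k2))) (c (Inl (Suc k1, k2))) (d (Inr (k1, Suc k2))))"
  show "blocks_psd antidiag_pair d c"
    unfolding blocks_psd_def
  proof (intro allI conjI impI)
    fix j
    show "0 \<le> d j" if "antidiag_pair j = j"
      using that fixed_pairs by (cases j rule: antidiag_pair.cases) (auto split: if_splits)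
    show "psd2 (d j) (c j) (d (antidiag_pair j))" if "antidiag_pair j \<noteq> j"
    proof (cases j rule: antidiag_pair.cases)
      case (1 k1 k2)
      then have "k1 \<noteq> 0" using that by (auto split: if_splits)
      then obtain k where "k1 = Suc k" using not0_implies_Suc by blast
      then show ?thesis using 1 fixed_pairs by simp
    next
      case (2 j1 j2)
      then have "j2 \<noteq> 0" using that by (auto split: if_splits)
      then obtain k where k: "j2 = Suc k" using not0_implies_Suc by blast
      have "c (antidiag_pair (Inr (j1, Suc k))) = c (Inr (j1, Suc k))"
        using assms unfolding symmetric_offdiag_def by blast
      then have "c (Inr (j1, Suc k)) = c (Inl (Suc j1, k))" by simp
      then show ?thesis using 2 k fixed_pairs by (simp add: psd2_commute)
    qed
  qed
qed

lemma sqrt_gap_diag_fixed: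
  "0 \<le> sqrt_gap_diag al be (Inl (0, k))" "0 \<le> sqrt_gap_diag al be (Inr (k, 0))"
  by (simp_all add: sqrt_gap_diag_def block_sqrt_diag_def sqrt2_scalar sqrt2_diag_def)

lemma sqrt_gap_pair:
  "sqrt_gap_diag al be (Inl (Suc k1, k2)) =
     sqrt2_diag ((al (Suc k1, k2))\<^sup>2) (be (Suc k1, k2) * al (k1, Suc k2)) ((be (k1, Suc k2))\<^sup>2)
     - sqrt2_diag ((al (k1, k2))\<^sup>2) (al (k1, k2) * be (k1, k2)) ((be (k1, k2))\<^sup>2)"
  "sqrt_gap_off al be (Inl (Suc k1, k2)) =
     sqrt2_off ((al (Suc k1, k2))\<^sup>2) (be (Suc k1, k2) * al (k1, Suc k2)) ((be (k1, Suc k2))\<^sup>2)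
     - sqrt2_off ((al (k1, k2))\<^sup>2) (al (k1, k2) * be (k1, k2)) ((be (k1, k2))\<^sup>2)"
  "sqrt_gap_diag al be (Inr (k1, Suc k2)) =
     sqrt2_diag ((be (k1, Suc k2))\<^sup>2) (be (Suc k1, k2) * al (k1, Suc k2)) ((al (Suc k1, k2))\<^sup>2)
     - sqrt2_diag ((be (k1, k2))\<^sup>2) (al (k1, k2) * be (k1, k2)) ((al (k1, k2))\<^sup>2)"
  by (simp_all add: sqrt_gap_diag_def sqrt_gap_off_def block_sqrt_diag_def block_sqrt_off_def)

lemma semi_hyponormal_iff_pair_blocks:
  assumes "bounded (range al)" "bounded (range be)"
    and "blocks_psd antidiag_pair (L_diag al be) (L_off al be)"
  shows "semi_hyponormal (shift1 al) (shift2 be) \<longleftrightarrow>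
    (\<forall>k1 k2. psd2 (sqrt_gap_diag al be (Inl (Suc k1, k2))) (sqrt_gap_off al be (Inl (Suc k1, k2)))
                  (sqrt_gap_diag al be (Inr (k1, Suc k2))))"
proof -
  have "symmetric_offdiag antidiag_pair (sqrt_gap_off al be)"
    using symmetric_offdiag_block_sqrt[OF involution_antidiag_pair symmetric_offdiag_L_off]
      symmetric_offdiag_block_sqrt[OF involution_antidiag_pair symmetric_offdiag_R_off]
    by (simp add: symmetric_offdiag_def sqrt_gap_off_def)
  then show ?thesis
    using semi_hyponormal_iff_blocks_psd[OF assms] blocks_psd_antidiag_pair_iff sqrt_gap_diag_fixed
    by simp
qed

lemma a_sq_y_div_x_bounds:
  fixes a x y :: real
  assumes "0 < a" "a < 1" "0 < x" "0 < y" "a * y < x"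
  shows "0 < a\<^sup>2 * y / x" "a\<^sup>2 * y / x < 1"
proof -
  have "a\<^sup>2 * y = a * (a * y)" by (simp add: power2_eq_square)
  also have "\<dots> < 1 * x" using assms by (intro mult_strict_mono) auto
  finally show "0 < a\<^sup>2 * y / x" "a\<^sup>2 * y / x < 1" using assms by simp_all
qed

context
  fixes a x y :: real
  assumes a: "0 < a" "a < 1" and x: "0 < x" "x < 1" and y: "0 < y" "y < 1" and axy: "a * y < x"
begin

lemma W_beta_weight: "0 < a * y / x" "a * y / x < 1"
  using a x y axy by simp_all

lemma W_weights_le_1: "\<bar>alphaW a x y k\<bar> \<le> 1" "\<bar>betaW a x y k\<bar> \<le> 1"
  using a x y W_beta_weight by (auto simp: alphaW_def betaW_def split: prod.splits)

lemma W_weights_bounded: "bounded (range (alphaW a x y))" "bounded (range (betaW a x y))"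
  using W_weights_le_1 unfolding bounded_iff by auto

lemma W_blocks_psd_L: "blocks_psd antidiag_pair (L_diag (alphaW a x y) (betaW a x y)) (L_off (alphaW a x y) (betaW a x y))"
proof -
  have "\<bar>betaW a x y (Suc k1, k2) * alphaW a x y (k1, Suc k2)\<bar> \<le> 1" for k1 k2
    using W_weights_le_1 by (simp add: abs_mult mult_le_one)
  then have "psd2 1 (betaW a x y (Suc k1, k2) * alphaW a x y (k1, Suc k2)) 1" for k1 k2
    by (simp add: psd2_def abs_square_le_1)
  then show ?thesis
    by (simp add: blocks_psd_antidiag_pair_iff[OF symmetric_offdiag_L_off] alphaW_def betaW_def)
qed

lemma W_sum_squares_lt_2: "x\<^sup>2 + y\<^sup>2 < 2"
proof -
  have "x * x < 1 * 1" "y * y < 1 * 1" using x y by (intro mult_strict_mono; simp)+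
  then show ?thesis by (simp add: power2_eq_square)
qed

text \<open>Only the block at \<open>k = (1, 0)\<close> gives a condition: the blocks at \<open>(1, k\<^sub>2)\<close>, \<open>k\<^sub>2 \<ge> 1\<close>, and
  at \<open>(k\<^sub>1, 0)\<close>, \<open>k\<^sub>1 \<ge> 2\<close>, are positive for all admissible parameters, and those with
  \<open>k\<^sub>1 \<ge> 2\<close>, \<open>k\<^sub>2 \<ge> 1\<close> vanish.\<close>

lemma W_pair_block_iff:
  "psd2 (sqrt_gap_diag (alphaW a x y) (betaW a x y) (Inl (Suc k1, k2)))
        (sqrt_gap_off (alphaW a x y) (betaW a x y) (Inl (Suc k1, k2)))
        (sqrt_gap_diag (alphaW a x y) (betaW a x y) (Inr (k1, Suc k2)))
   \<longleftrightarrow> (k1 = 0 \<and> k2 = 0 \<longrightarrow>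
     (x + y)\<^sup>2 + sqrt (1 + a\<^sup>2 * y / x) / sqrt (1 - a\<^sup>2 * y / x) * (x - y)\<^sup>2
       \<le> 2 * sqrt (x\<^sup>2 + y\<^sup>2) * sqrt (1 + a\<^sup>2 * y / x))"
proof -
  define b where "b = a * y / x"
  have b: "0 < b" "b < 1" using W_beta_weight by (simp_all add: b_def)
  have u: "0 < a\<^sup>2 * y / x" "a\<^sup>2 * y / x < 1" "a * y * a / x = a\<^sup>2 * y / x"
    using a_sq_y_div_x_bounds[OF a x(1) y(1) axy] by (simp_all add: power2_eq_square mult_ac)
  consider "k1 = 0" "k2 = 0" | "k1 = 0" "k2 \<noteq> 0" | "k1 \<noteq> 0" "k2 = 0" | "k1 \<noteq> 0" "k2 \<noteq> 0" by blast
  then show ?thesis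
  proof cases
    case 1
    then show ?thesis using psd2_sqrt2_gap_iff[OF u(1,2) x(1) y(1) W_sum_squares_lt_2]
      by (simp add: sqrt_gap_pair alphaW_def betaW_def u(3))
  next
    case 2
    have "a\<^sup>2 + 1\<^sup>2 < 2" using a by (simp add: power_less_one_iff)
    then show ?thesis using 2 psd2_sqrt2_gap_iff[OF a a(1) zero_less_one] sqrt2_gap_ineq_diagonal_weight[OF a]
      by (simp add: sqrt_gap_pair alphaW_def betaW_def)
  next
    case 3
    have "1\<^sup>2 + b\<^sup>2 < 2" using b by (simp add: power_less_one_iff)
    then show ?thesis using 3 psd2_sqrt2_gap_iff[OF b zero_less_one b(1)] sqrt2_gap_ineq_diagonal_weight[OF b]
      by (simp add: sqrt_gap_pair alphaW_def betaW_def b_def add.commute power2_commute)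
  next
    case 4
    then show ?thesis by (simp add: sqrt_gap_pair alphaW_def betaW_def psd2_def)
  qed
qed

lemma semi_hyponormal_W_iff:
  "semi_hyponormal (W1 a x y) (W2 a x y) \<longleftrightarrow>
     (x + y)\<^sup>2 + sqrt (1 + a\<^sup>2 * y / x) / sqrt (1 - a\<^sup>2 * y / x) * (x - y)\<^sup>2
       \<le> 2 * sqrt (x\<^sup>2 + y\<^sup>2) * sqrt (1 + a\<^sup>2 * y / x)"
  unfolding W1_def W2_def semi_hyponormal_iff_pair_blocks[OF W_weights_bounded W_blocks_psd_L]
    W_pair_block_iff by blast

end


section \<open>The conditions in closed form\<close>

text \<open>With \<open>u = a\<^sup>2 y / x\<close> the second stated condition is the determinant inequality of
  \<open>semi_hyponormal_W_iff\<close> rescaled by \<open>1/2\<close>; the first one is then automatic, since it only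
  expresses that the term \<open>\<surd>(1 + u)/\<surd>(1 - u) (x - y)\<^sup>2\<close> alone is at most \<open>2 \<surd>(x\<^sup>2 + y\<^sup>2) \<surd>(1 + u)\<close>.\<close>

context
  fixes a x y :: real
  assumes a: "0 < a" "a < 1" and x: "0 < x" and y: "0 < y" and axy: "a * y < x"
begin

lemma closed_form_second_condition_iff:
  "sqrt ((x\<^sup>2 + y\<^sup>2) * (x + a\<^sup>2*y) / x) \<ge> (x + y)\<^sup>2 / 2 + sqrt ((x + a\<^sup>2*y) * (x - y)^4 / (4 * (x - a\<^sup>2*y)))
   \<longleftrightarrow> (x + y)\<^sup>2 + sqrt (1 + a\<^sup>2 * y / x) / sqrt (1 - a\<^sup>2 * y / x) * (x - y)\<^sup>2
         \<le> 2 * sqrt (x\<^sup>2 + y\<^sup>2) * sqrt (1 + a\<^sup>2 * y / x)"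
proof -
  define u where "u = a\<^sup>2 * y / x"
  have u: "0 < u" "u < 1" using a_sq_y_div_x_bounds[OF a x y axy] by (simp_all add: u_def)
  have "x - a\<^sup>2 * y > 0" using u x by (simp add: u_def field_simps)
  have "(x\<^sup>2 + y\<^sup>2) * (x + a\<^sup>2*y) / x = (x\<^sup>2 + y\<^sup>2) * (1 + u)"
    unfolding u_def using x by (simp add: field_simps)
  then have first: "sqrt ((x\<^sup>2 + y\<^sup>2) * (x + a\<^sup>2*y) / x) = sqrt (x\<^sup>2 + y\<^sup>2) * sqrt (1 + u)"
    by (simp add: real_sqrt_mult)
  have "(1 + u) / (1 - u) = (x + a\<^sup>2*y) / (x - a\<^sup>2*y)"
    unfolding u_def using x \<open>x - a\<^sup>2 * y > 0\<close> by (simp add: field_simps)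
  then have "(x + a\<^sup>2*y) * (x - y)^4 / (4 * (x - a\<^sup>2*y)) = ((x - y)\<^sup>2 / 2)\<^sup>2 * ((1 + u) / (1 - u))"
    by (simp add: power2_eq_square power4_eq_xxxx field_simps)
  then have second: "sqrt ((x + a\<^sup>2*y) * (x - y)^4 / (4 * (x - a\<^sup>2*y))) = (x - y)\<^sup>2 / 2 * (sqrt (1 + u) / sqrt (1 - u))"
    by (simp add: real_sqrt_mult real_sqrt_divide)
  show ?thesis unfolding first second u_def[symmetric] by (simp add: field_simps)
qed

lemma closed_form_first_condition_if_second:
  assumes "(x + y)\<^sup>2 + sqrt (1 + a\<^sup>2 * y / x) / sqrt (1 - a\<^sup>2 * y / x) * (x - y)\<^sup>2
             \<le> 2 * sqrt (x\<^sup>2 + y\<^sup>2) * sqrt (1 + a\<^sup>2 * y / x)"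
  shows "a\<^sup>2 \<le> x * (4*x\<^sup>2 - x^4 + 4*x^3*y + 4*y\<^sup>2 - 6*x\<^sup>2*y\<^sup>2 + 4*x*y^3 - y^4) / (4*y*(x\<^sup>2 + y\<^sup>2))"
proof -
  define u where "u = a\<^sup>2 * y / x"
  define P where "P = sqrt (1 + u)"
  define Q where "Q = sqrt (1 - u)"
  define n where "n = sqrt (x\<^sup>2 + y\<^sup>2)"
  have u: "0 < u" "u < 1" using a_sq_y_div_x_bounds[OF a x y axy] by (simp_all add: u_def)
  have P: "P > 0" and Q: "Q > 0" "Q\<^sup>2 = 1 - u" using u by (simp_all add: P_def Q_def)
  have "(x + y)\<^sup>2 + P / Q * (x - y)\<^sup>2 \<le> 2 * n * P"
    using assms unfolding u_def P_def Q_def n_def .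
  moreover have "(x + y)\<^sup>2 > 0" using x y by simp
  ultimately have "P / Q * (x - y)\<^sup>2 < 2 * n * P" by linarith
  then have "(x - y)\<^sup>2 < 2 * n * Q" using P Q by (simp add: field_simps)
  then have "((x - y)\<^sup>2)\<^sup>2 \<le> (2 * n * Q)\<^sup>2" by (intro power_mono) simp_all
  then have "(x - y)^4 \<le> 4 * (x\<^sup>2 + y\<^sup>2) * (1 - u)"
    by (simp add: power_mult_distrib n_def Q flip: power_mult)
  then have "4 * (x\<^sup>2 + y\<^sup>2) * (a\<^sup>2 * y) \<le> x * (4 * (x\<^sup>2 + y\<^sup>2) - (x - y)^4)"
    using x by (simp add: u_def field_simps)
  moreover have "4 * (x\<^sup>2 + y\<^sup>2) - (x - y)^4 = 4*x\<^sup>2 - x^4 + 4*x^3*y + 4*y\<^sup>2 - 6*x\<^sup>2*y\<^sup>2 + 4*x*y^3 - y^4"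
    by (simp add: power2_eq_square power4_eq_xxxx power3_eq_cube algebra_simps)
  moreover have "4 * y * (x\<^sup>2 + y\<^sup>2) > 0" using x y by (intro mult_pos_pos add_pos_pos) simp_all
  ultimately show ?thesis by (simp add: pos_le_divide_eq algebra_simps)
qed

end

theorem theorem3p16:
  fixes a x y :: real
  assumes "0 < a" "a < 1" "0 < x" "x < 1" "0 < y" "y < 1" "a * y < x"
  shows "semi_hyponormal (W1 a x y) (W2 a x y) \<longleftrightarrow>
    (a\<^sup>2 \<le> x * (4*x\<^sup>2 - x^4 + 4*x^3*y + 4*y\<^sup>2 - 6*x\<^sup>2*y\<^sup>2 + 4*x*y^3 - y^4) / (4*y*(x\<^sup>2 + y\<^sup>2)) \<and>
     sqrt ((x\<^sup>2 + y\<^sup>2) * (x + a\<^sup>2*y) / x) \<ge>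
       (x + y)\<^sup>2 / 2 + sqrt ((x + a\<^sup>2*y) * (x - y)^4 / (4 * (x - a\<^sup>2*y))))"
  using semi_hyponormal_W_iff[OF assms] closed_form_second_condition_iff[OF assms(1,2,3,5,7)]
    closed_form_first_condition_if_second[OF assms(1,2,3,5,7)]
  by blast

end
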